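(* Let $J\in\mathbb Z_{>0}$, $i_1,i_2\in\mathbb Z_{\ge0}$ and $j_1,j_2\in\{0,1,\dots,J\}$ with $i_1+j_1=i_2+j_2$, and set $v=-\eta\Lambda$. Then $$W_J(i_1,j_1;i_2,j_2\mid -\eta\Lambda,\lambda)=f(2\eta)^{i_2-i_1}\frac{\mathbf 1_{i_1\ge j_2}[2\eta J]_J}{[2\eta j_1]_{j_1}[2\eta(J-j_1)]_{J-j_1}}\frac{[2\eta\Lambda]_{i_1}}{[2\eta\Lambda]_{i_2}}\frac{[2\eta i_1]_{j_2}[2\eta(\Lambda-i_1)]_{J-j_2}}{[2\eta\Lambda]_J}$$ $$\times\frac{[\lambda+2\eta i_2]_{J-j_1}[\lambda+2\eta(i_2+j_1-\Lambda-1)]_{j_1}}{[\lambda+2\eta j_1]_{J-j_1}[\lambda+2\eta(2j_1-J-1)]_{j_1}}.$$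
   Context: Fix $\eta,\tau\in\mathbb C$, $\operatorname{Im}\tau>0$. $f(z)$ denotes either $\theta(z)=-\sum_{j\in\mathbb Z}\exp\big(\pi\mathbf i\tau(j+\tfrac12)^2+2\pi\mathbf i(j+\tfrac12)(z+\tfrac12)\big)$ or $\sin(\pi z)$. Elliptic Pochhammer: $[a]_k=\prod_{m=0}^{k-1}f(a-2\eta m)$ for $k\ge0$, $[a]_k=\prod_{m=1}^{-k}f(a+2\eta m)^{-1}$ for $k<0$. Unfused weights ($k\ge0$): $W_1(k,0;k,0\mid v,\lambda,\Lambda)=\frac{f(\eta(\Lambda-2k)-v)f(\lambda+2k\eta)}{f(\eta\Lambda-v)f(\lambda)}$, $W_1(k,1;k+1,0\mid\cdot)=\frac{f(v+\lambda+\eta(2k+2-\Lambda))f(2\eta)}{f(\eta\Lambda-v)f(\lambda)}$, $W_1(k,0;k-1,1\mid\cdot)=\frac{f(\lambda-v+\eta(2k-2-\Lambda))f(2\eta(\Lambda+1-k))f(2k\eta)}{f(\eta\Lambda-v)f(\lambda)f(2\eta)}$ ($k\ge1$), $W_1(k,1;k,1\mid\cdot)=\frac{f(\eta(2k-\Lambda)-v)f(\lambda+2\eta(k-\Lambda))}{f(\eta\Lambda-v)f(\lambda)}$, and $0$ otherwise. Column weights: for $\mathcal J_1=(j_{1,k})_{k=1}^J,\mathcal J_2=(j_{2,k})_{k=1}^J\in\{0,1\}^J$, $i^{(1)}=i_1$, $i^{(k+1)}=i^{(k)}+j_{1,k}-j_{2,k}$, $\Phi_J=\lambda$, $\Phi_k=\Phi_{k+1}\mp2\eta$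 according as $j_{1,k+1}=0$ or $1$; $W_J(i_1,\mathcal J_1;i_2,\mathcal J_2\mid v,\lambda)=\prod_{k=1}^JW_1(i^{(k)},j_{1,k};i^{(k+1)},j_{2,k}\mid v+2\eta(k-1),\Phi_k,\Lambda)$ if all $i^{(k)}\ge0$ and $i^{(J+1)}=i_2$, else $0$. Fused weight: $W_J(i_1,j_1;i_2,j_2\mid v,\lambda)=\sum_{|\mathcal J_1|=j_1}W_J(i_1,\mathcal J_1;i_2,\mathcal K\mid v,\lambda)$ for any $\mathcal K$ with $|\mathcal K|=j_2$ (independent of $\mathcal K$); $\Lambda$ is suppressed. *)

theory Defs
  imports "HOL-Analysis.Analysis"
begin

definition theta_fn :: "complex \<Rightarrow> complex \<Rightarrow> complex" where
  "theta_fn \<tau> z = - (\<Sum>\<^sub>\<infinity>j::int.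
      exp (pi * \<i> * \<tau> * (of_int j + 1/2)^2 + 2 * pi * \<i> * (of_int j + 1/2) * (z + 1/2)))"

definition epoch :: "(complex \<Rightarrow> complex) \<Rightarrow> complex \<Rightarrow> complex \<Rightarrow> int \<Rightarrow> complex" where
  "epoch f \<eta> a k =
     (if k \<ge> 0 then (\<Prod>m<nat k. f (a - 2 * \<eta> * of_nat m))
      else (\<Prod>m\<in>{1..nat (-k)}. inverse (f (a + 2 * \<eta> * of_nat m))))"

definition W1 :: "(complex \<Rightarrow> complex) \<Rightarrow> complex \<Rightarrow> complex \<Rightarrow>
    int \<Rightarrow> nat \<Rightarrow> int \<Rightarrow> nat \<Rightarrow> complex \<Rightarrow> complex \<Rightarrow> complex" where
  "W1 f \<eta> \<Lambda> k b k' d v l =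
    (if k < 0 then 0
     else if b = 0 \<and> k' = k \<and> d = 0 then
       f (\<eta> * (\<Lambda> - 2 * of_int k) - v) * f (l + 2 * of_int k * \<eta>) / (f (\<eta> * \<Lambda> - v) * f l)
     else if b = 1 \<and> k' = k + 1 \<and> d = 0 then
       f (v + l + \<eta> * (2 * of_int k + 2 - \<Lambda>)) * f (2 * \<eta>) / (f (\<eta> * \<Lambda> - v) * f l)
     else if b = 0 \<and> k' = k - 1 \<and> d = 1 \<and> k \<ge> 1 then
       f (l - v + \<eta> * (2 * of_int k - 2 - \<Lambda>)) * f (2 * \<eta> * (\<Lambda> + 1 - of_int k)) * f (2 * of_int k * \<eta>)
         / (f (\<eta> * \<Lambda> - v) * f l * f (2 * \<eta>))
     else if b = 1 \<and> k' = k \<and> d = 1 then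
       f (\<eta> * (2 * of_int k - \<Lambda>) - v) * f (l + 2 * \<eta> * (of_int k - \<Lambda>)) / (f (\<eta> * \<Lambda> - v) * f l)
     else 0)"

text \<open>Binary sequences (j_1,...,j_J) represented as lists of length J; entry k is xs!(k-1).\<close>
definition bin_seqs :: "nat \<Rightarrow> nat list set" where
  "bin_seqs J = {xs. length xs = J \<and> set xs \<subseteq> {0, 1}}"

definition ipos :: "nat \<Rightarrow> nat list \<Rightarrow> nat list \<Rightarrow> nat \<Rightarrow> int" where
  "ipos i1 J1 J2 k = int i1 + (\<Sum>m\<in>{1..<k}. int (J1 ! (m - 1)) - int (J2 ! (m - 1)))"

text \<open>Phi_J = l, Phi_k = Phi_{k+1} - 2 eta if j_{1,k+1}=0, + 2 eta if j_{1,k+1}=1.\<close>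
definition Phi :: "complex \<Rightarrow> complex \<Rightarrow> nat \<Rightarrow> nat list \<Rightarrow> nat \<Rightarrow> complex" where
  "Phi \<eta> l J J1 k = l + (\<Sum>m\<in>{k+1..J}. (if J1 ! (m - 1) = 0 then - 2 * \<eta> else 2 * \<eta>))"

definition WJcol :: "(complex \<Rightarrow> complex) \<Rightarrow> complex \<Rightarrow> complex \<Rightarrow> nat \<Rightarrow>
    nat \<Rightarrow> nat list \<Rightarrow> nat \<Rightarrow> nat list \<Rightarrow> complex \<Rightarrow> complex \<Rightarrow> complex" where
  "WJcol f \<eta> \<Lambda> J i1 J1 i2 J2 v l =
    (if (\<forall>k\<in>{1..J+1}. ipos i1 J1 J2 k \<ge> 0) \<and> ipos i1 J1 J2 (J + 1) = int i2 then
       (\<Prod>k\<in>{1..J}. W1 f \<eta> \<Lambda> (ipos i1 J1 J2 k) (J1 ! (k - 1)) (ipos i1 J1 J2 (k + 1)) (J2 ! (k - 1))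
                         (v + 2 * \<eta> * of_nat (k - 1)) (Phi \<eta> l J J1 k))
     else 0)"

text \<open>Fused weight: sum over J1 with |J1| = j1, for a (any) fixed K with |K| = j2.\<close>
definition WJ :: "(complex \<Rightarrow> complex) \<Rightarrow> complex \<Rightarrow> complex \<Rightarrow> nat \<Rightarrow>
    nat \<Rightarrow> nat \<Rightarrow> nat \<Rightarrow> nat \<Rightarrow> complex \<Rightarrow> complex \<Rightarrow> complex" where
  "WJ f \<eta> \<Lambda> J i1 j1 i2 j2 v l =
    (let K = (SOME K. K \<in> bin_seqs J \<and> sum_list K = j2) in
     \<Sum>J1\<in>{xs \<in> bin_seqs J. sum_list xs = j1}. WJcol f \<eta> \<Lambda> J i1 J1 i2 K v l)"

end

theory Submission
  imports Defs
begin

text \<open>At \<open>v = -\<eta>\<Lambda>\<close> every vertex weight of a column is a ratio of values of \<open>f\<close> on the four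
  progressions \<open>2\<eta>\<int>\<close>, \<open>2\<eta>\<Lambda> + 2\<eta>\<int>\<close>, \<open>\<lambda> + 2\<eta>\<int>\<close> and \<open>\<lambda> - 2\<eta>\<Lambda> + 2\<eta>\<int>\<close>. Removing the last vertex of a
  column of height \<open>n + 1\<close> writes the sum over \<open>J\<^sub>1\<close> (for a fixed \<open>K\<close>) through two such sums of
  height \<open>n\<close>, with \<open>\<lambda>\<close> shifted by \<open>\<mp>2\<eta>\<close> according to the last entry of \<open>J\<^sub>1\<close>. The closed form
  satisfies the same recursion: after cancelling common factors this is the three-term identity
  \<open>f(x+y)f(x-y)f(u+v)f(u-v) - f(x+u)f(x-u)f(y+v)f(y-v) + f(x+v)f(x-v)f(y+u)f(y-u) = 0\<close>,
  valid for every \<open>f\<close> with \<open>f(x+y)f(x-y) = A(x)B(y) - B(x)A(y)\<close>, in particular for \<open>sin(\<pi>z)\<close> and \<open>\<theta>\<close>.\<close>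

section \<open>A product formula for the theta function\<close>

lemma summable_on_exp_neg_abs_int: "(\<lambda>n::int. exp (- real_of_int \<bar>n\<bar>)) summable_on UNIV"
proof -
  have UNIV_int: "(UNIV::int set) = range int \<union> range (\<lambda>n. - int n - 1)"
  proof (intro set_eqI iffI)
    fix x :: int
    show "x \<in> range int \<union> range (\<lambda>n. - int n - 1)"
    proof (cases "x \<ge> 0")
      case True
      then have "x = int (nat x)" by simp
      then show ?thesis by blast
    next
      case False
      then have "x = - int (nat (- x - 1)) - 1" by simp
      then show ?thesis by blast
    qed
  qed simp
  have "summable (\<lambda>n::nat. exp (-1::real) ^ n)"
    by (rule summable_geometric) simp
  then have nat: "(\<lambda>n::nat. exp (- real n)) summable_on UNIV"
    by (intro summable_nonneg_imp_summable_on) (auto simp: exp_of_nat_mult[symmetric] mult.commute)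
  have "(\<lambda>n::int. exp (- real_of_int \<bar>n\<bar>)) summable_on range int"
    by (subst summable_on_reindex) (use nat in \<open>auto simp: o_def\<close>)
  moreover have "(\<lambda>n::int. exp (- real_of_int \<bar>n\<bar>)) summable_on range (\<lambda>n. - int n - 1)"
  proof (subst summable_on_reindex)
    show "inj_on (\<lambda>n. - int n - 1) UNIV" by (auto simp: inj_on_def)
    show "((\<lambda>n::int. exp (- real_of_int \<bar>n\<bar>)) \<circ> (\<lambda>n. - int n - 1)) summable_on UNIV"
      using summable_on_cmult_right[OF nat, of "exp (- 1)"]
      by (simp add: o_def exp_add[symmetric] algebra_simps)
  qed
  ultimately show ?thesis
    unfolding UNIV_int by (rule summable_on_Un_disjoint) auto
qed

lemma summable_on_gaussian_int:
  fixes c d :: real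
  assumes "c > 0"
  shows "(\<lambda>n::int. exp (- c * (of_int n)^2 + d * of_int n)) summable_on UNIV"
proof -
  define K where "K = (\<bar>d\<bar> + 1)^2 / (4 * c)"
  have bound: "norm (exp (- c * (of_int n)^2 + d * of_int n)) \<le> exp K * exp (- real_of_int \<bar>n\<bar>)"
    for n :: int
  proof -
    define t where "t = real_of_int \<bar>n\<bar>"
    have "d * of_int n \<le> \<bar>d\<bar> * t"
      unfolding t_def by (metis abs_ge_self abs_mult of_int_abs)
    moreover have "0 \<le> c * (t - (\<bar>d\<bar> + 1) / (2 * c))^2"
      using assms by simp
    moreover have "c * (t - (\<bar>d\<bar> + 1) / (2 * c))^2 = c * t^2 - (\<bar>d\<bar> + 1) * t + K"
      using assms unfolding K_def by (simp add: power2_eq_square field_simps)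
    moreover have "(of_int n)^2 = t^2"
      unfolding t_def by simp
    ultimately have "- c * (of_int n)^2 + d * of_int n \<le> K + - t"
      by (simp add: algebra_simps)
    then show ?thesis
      unfolding t_def exp_add[symmetric] by simp
  qed
  have "(\<lambda>n::int. norm (exp K * exp (- real_of_int \<bar>n\<bar>))) summable_on UNIV"
    using summable_on_cmult_right[OF summable_on_exp_neg_abs_int]
    by (simp add: summable_on_iff_abs_summable_on_real[symmetric])
  then have "(\<lambda>n::int. norm (exp (- c * (of_int n)^2 + d * of_int n))) summable_on UNIV"
    by (rule Infinite_Sum.abs_summable_on_comparison_test) (use bound in simp)
  then show ?thesis
    by simp
qed

lemma summable_on_exp_quadratic_int:
  fixes A B :: complex and b :: real
  assumes "Re A < 0"
  shows "(\<lambda>j::int. exp (A * (of_real (of_int j + b))^2 + B * of_real (of_int j + b))) summable_on UNIV"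
proof -
  define e where "e = Re A * b^2 + Re B * b"
  have "norm (exp (A * (of_real (of_int j + b))^2 + B * of_real (of_int j + b)))
     = exp e * exp (- (- Re A) * (of_int j)^2 + (2 * b * Re A + Re B) * of_int j)" for j :: int
  proof -
    have "(of_real (of_int j + b) :: complex)^2 = of_real ((of_int j + b)^2)"
      by simp
    then have "Re (A * (of_real (of_int j + b))^2 + B * of_real (of_int j + b))
        = Re A * (of_int j + b)^2 + Re B * (of_int j + b)"
      by (simp only: plus_complex.sel times_complex.sel Re_complex_of_real Im_complex_of_real mult_zero_right diff_zero)
    also have "\<dots> = e + (- (- Re A) * (of_int j)^2 + (2 * b * Re A + Re B) * of_int j)"
      unfolding e_def by (simp add: power2_eq_square algebra_simps)
    finally show ?thesis
      by (simp only: norm_exp_eq_Re exp_add[of e])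
  qed
  moreover have "(\<lambda>j::int. exp e * exp (- (- Re A) * (of_int j)^2 + (2 * b * Re A + Re B) * of_int j))
      summable_on UNIV"
    by (rule summable_on_cmult_right, rule summable_on_gaussian_int) (use assms in simp)
  ultimately show ?thesis
    by (simp add: summable_on_iff_abs_summable_on_complex)
qed

lemma infsum_mult_infsum:
  fixes f :: "'a \<Rightarrow> complex" and g :: "'b \<Rightarrow> complex"
  assumes f: "f summable_on UNIV" and g: "g summable_on UNIV"
  shows "(\<lambda>(j, k). f j * g k) summable_on UNIV"
    and "(\<Sum>\<^sub>\<infinity>j. f j) * (\<Sum>\<^sub>\<infinity>k. g k) = (\<Sum>\<^sub>\<infinity>(j, k). f j * g k)"
proof -
  have nf: "(\<lambda>j. norm (f j)) summable_on UNIV" and ng: "(\<lambda>k. norm (g k)) summable_on UNIV"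
    using f g summable_on_iff_abs_summable_on_complex by blast+
  have "(\<lambda>p. norm ((\<lambda>(j, k). f j * g k) p)) summable_on Sigma UNIV (\<lambda>_. UNIV)"
  proof (subst Infinite_Sum.abs_summable_on_Sigma_iff, intro conjI ballI)
    show "(\<lambda>k. norm ((\<lambda>(j, k). f j * g k) (j, k))) summable_on UNIV" for j
      using summable_on_cmult_right[OF ng, of "norm (f j)"] by (simp add: norm_mult)
    have "(\<lambda>j. norm (\<Sum>\<^sub>\<infinity>k. norm ((\<lambda>(j, k). f j * g k) (j, k))))
        = (\<lambda>j. norm (f j) * (\<Sum>\<^sub>\<infinity>k. norm (g k)))"
      by (simp add: norm_mult infsum_cmult_right' infsum_nonneg abs_mult)
    then show "(\<lambda>j. norm (\<Sum>\<^sub>\<infinity>k. norm ((\<lambda>(j, k). f j * g k) (j, k)))) summable_on UNIV"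
      using summable_on_cmult_left[OF nf] by simp
  qed
  then have S: "(\<lambda>(j, k). f j * g k) summable_on Sigma UNIV (\<lambda>_. UNIV)"
    using summable_on_iff_abs_summable_on_complex by blast
  then show "(\<lambda>(j, k). f j * g k) summable_on UNIV"
    by simp
  have "(\<Sum>\<^sub>\<infinity>j. f j) * (\<Sum>\<^sub>\<infinity>k. g k) = (\<Sum>\<^sub>\<infinity>j. \<Sum>\<^sub>\<infinity>k. f j * g k)"
    by (simp add: infsum_cmult_left'[symmetric] infsum_cmult_right')
  also have "\<dots> = (\<Sum>\<^sub>\<infinity>(j, k)\<in>Sigma UNIV (\<lambda>_. UNIV). f j * g k)"
    by (rule infsum_Sigma'_banach[of "\<lambda>j k. f j * g k"]) (use S in simp)
  finally show "(\<Sum>\<^sub>\<infinity>j. f j) * (\<Sum>\<^sub>\<infinity>k. g k) = (\<Sum>\<^sub>\<infinity>(j, k). f j * g k)"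
    by simp
qed

lemma int_pairs_parity_partition:
  fixes p1 p2 :: "int \<times> int \<Rightarrow> int \<times> int"
  defines "p1 \<equiv> \<lambda>(r, s). (r + s, r - s - 1)" and "p2 \<equiv> \<lambda>(r, s). (r + s, r - s)"
  shows "UNIV = range p1 \<union> range p2" and "range p1 \<inter> range p2 = {}"
    and "inj p1" and "inj p2"
proof -
  show "UNIV = range p1 \<union> range p2"
  proof (intro set_eqI iffI)
    fix z :: "int \<times> int"
    obtain j k where z: "z = (j, k)" by (cases z)
    show "z \<in> range p1 \<union> range p2"
    proof (cases "even (j + k)")
      case True
      then obtain m where "j + k = 2 * m" by (rule evenE)
      then have "p2 (m, j - m) = z" unfolding p2_def z by simp
      then show ?thesis by blast
    next
      case False
      then obtain m where "j + k = 2 * m + 1" by (rule oddE)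
      then have "p1 (m + 1, j - m - 1) = z" unfolding p1_def z by simp
      then show ?thesis by blast
    qed
  qed simp
  show "range p1 \<inter> range p2 = {}"
  proof (rule ccontr)
    assume "range p1 \<inter> range p2 \<noteq> {}"
    then obtain u v where "p1 u = p2 v"
      by blast
    moreover obtain a b c d where "u = (a, b)" "v = (c, d)"
      by (cases u, cases v)
    ultimately have "a + b = c + d" "a - b - 1 = c - d"
      unfolding p1_def p2_def by simp_all
    then have "2 * a - 1 = 2 * c"
      by linarith
    then show False
      by presburger
  qed
  show "inj p1" and "inj p2"
    unfolding p1_def p2_def by (auto intro!: injI)
qed

definition theta_term :: "complex \<Rightarrow> complex \<Rightarrow> int \<Rightarrow> complex" where
  "theta_term \<tau> z j = exp (pi * \<i> * \<tau> * (of_int j + 1/2)^2 + 2 * pi * \<i> * (of_int j + 1/2) * (z + 1/2))"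

definition half_theta_term :: "complex \<Rightarrow> complex \<Rightarrow> int \<Rightarrow> complex" where
  "half_theta_term \<tau> w n = exp (pi * \<i> * (\<tau> / 2) * (of_int n)^2 + 2 * pi * \<i> * of_int n * w)"

definition theta_even :: "complex \<Rightarrow> complex \<Rightarrow> complex" where
  "theta_even \<tau> w = (\<Sum>\<^sub>\<infinity>r. half_theta_term \<tau> w (2 * r))"

definition theta_odd :: "complex \<Rightarrow> complex \<Rightarrow> complex" where
  "theta_odd \<tau> w = (\<Sum>\<^sub>\<infinity>r. half_theta_term \<tau> w (2 * r + 1))"

lemma summable_on_theta_term:
  assumes "Im \<tau> > 0"
  shows "theta_term \<tau> w summable_on UNIV"
proof -
  have "(\<lambda>j::int. exp ((pi * \<i> * \<tau>) * (of_real (of_int j + 1/2))^2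
      + (2 * pi * \<i> * (w + 1/2)) * of_real (of_int j + 1/2))) summable_on UNIV"
    by (rule summable_on_exp_quadratic_int) (use assms in simp)
  moreover have "theta_term \<tau> w = (\<lambda>j. exp ((pi * \<i> * \<tau>) * (of_real (of_int j + 1/2))^2
      + (2 * pi * \<i> * (w + 1/2)) * of_real (of_int j + 1/2)))"
    unfolding theta_term_def by (simp add: algebra_simps fun_eq_iff)
  ultimately show ?thesis
    by simp
qed

lemma summable_on_half_theta_term:
  assumes "Im \<tau> > 0"
  shows "(\<lambda>r. half_theta_term \<tau> w (2 * r + c)) summable_on UNIV"
proof -
  have "(\<lambda>j::int. exp ((pi * \<i> * (\<tau> / 2)) * (of_real (of_int j + 0))^2
      + (2 * pi * \<i> * w) * of_real (of_int j + 0))) summable_on UNIV"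
    by (rule summable_on_exp_quadratic_int) (use assms in simp)
  moreover have "half_theta_term \<tau> w = (\<lambda>j. exp ((pi * \<i> * (\<tau> / 2)) * (of_real (of_int j + 0))^2
      + (2 * pi * \<i> * w) * of_real (of_int j + 0)))"
    unfolding half_theta_term_def by (simp add: algebra_simps fun_eq_iff)
  ultimately have "half_theta_term \<tau> w summable_on UNIV"
    by simp
  then have "half_theta_term \<tau> w summable_on range (\<lambda>r::int. 2 * r + c)"
    by (rule summable_on_subset_banach) auto
  moreover have "inj (\<lambda>r::int. 2 * r + c)"
    by (auto simp: inj_on_def)
  ultimately show ?thesis
    by (simp add: summable_on_reindex o_def)
qed

lemma theta_term_mult_odd:
  "theta_term \<tau> (x + y) (r + s) * theta_term \<tau> (x - y) (r - s - 1)
     = half_theta_term \<tau> x (2 * r) * half_theta_term \<tau> y (2 * s + 1)"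
proof -
  define e where "e = pi * \<i> * (\<tau> / 2) * (of_int (2 * r))^2 + 2 * pi * \<i> * of_int (2 * r) * x
    + (pi * \<i> * (\<tau> / 2) * (of_int (2 * s + 1))^2 + 2 * pi * \<i> * of_int (2 * s + 1) * y)"
  have "theta_term \<tau> (x + y) (r + s) * theta_term \<tau> (x - y) (r - s - 1)
      = exp (e + \<i> * (of_int r * (of_real pi * 2)))"
    unfolding theta_term_def e_def exp_add[symmetric]
    by (rule arg_cong[where f = exp]) (simp add: algebra_simps power2_eq_square)
  also have "\<dots> = exp e"
    by (rule exp_plus_2pin)
  finally show ?thesis
    unfolding e_def half_theta_term_def exp_add .
qed

lemma theta_term_mult_even:
  "theta_term \<tau> (x + y) (r + s) * theta_term \<tau> (x - y) (r - s)
     = - (half_theta_term \<tau> x (2 * r + 1) * half_theta_term \<tau> y (2 * s))"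
proof -
  define e where "e = pi * \<i> * (\<tau> / 2) * (of_int (2 * r + 1))^2 + 2 * pi * \<i> * of_int (2 * r + 1) * x
    + (pi * \<i> * (\<tau> / 2) * (of_int (2 * s))^2 + 2 * pi * \<i> * of_int (2 * s) * y)"
  have "theta_term \<tau> (x + y) (r + s) * theta_term \<tau> (x - y) (r - s)
      = exp (e + \<i> * (of_int r * (of_real pi * 2))) * exp (of_real pi * \<i>)"
    unfolding theta_term_def e_def exp_add[symmetric]
    by (rule arg_cong[where f = exp]) (simp add: algebra_simps power2_eq_square)
  also have "\<dots> = exp e * exp (of_real pi * \<i>)"
    by (simp only: exp_plus_2pin)
  finally show ?thesis
    unfolding e_def half_theta_term_def exp_add exp_pi_i by simp
qed

lemma theta_fn_theta_term: "theta_fn \<tau> z = - (\<Sum>\<^sub>\<infinity>j. theta_term \<tau> z j)"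
  unfolding theta_fn_def theta_term_def ..

text \<open>Split the double series of the product according to the parity of \<open>j + k\<close>: the
  substitution \<open>(j, k) = (r + s, r - s - 1)\<close> resp. \<open>(r + s, r - s)\<close> separates the variables.\<close>

lemma theta_product_formula:
  assumes "Im \<tau> > 0"
  shows "theta_fn \<tau> (x + y) * theta_fn \<tau> (x - y)
       = theta_even \<tau> x * theta_odd \<tau> y - theta_odd \<tau> x * theta_even \<tau> y"
proof -
  define F where "F = (\<lambda>(j, k). theta_term \<tau> (x + y) j * theta_term \<tau> (x - y) k)"
  define p1 :: "int \<times> int \<Rightarrow> int \<times> int" where "p1 = (\<lambda>(r, s). (r + s, r - s - 1))"
  define p2 :: "int \<times> int \<Rightarrow> int \<times> int" where "p2 = (\<lambda>(r, s). (r + s, r - s))"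
  note partition = int_pairs_parity_partition[folded p1_def p2_def]
  note theta_summable = summable_on_theta_term[OF assms]
  note half_summable_0 = summable_on_half_theta_term[OF assms, of _ 0, unfolded add_0_right]
  note half_summable_1 = summable_on_half_theta_term[OF assms, of _ 1]
  have F: "F summable_on UNIV"
    unfolding F_def by (rule infsum_mult_infsum(1)) (rule theta_summable)+
  have "theta_fn \<tau> (x + y) * theta_fn \<tau> (x - y)
      = (\<Sum>\<^sub>\<infinity>j. theta_term \<tau> (x + y) j) * (\<Sum>\<^sub>\<infinity>k. theta_term \<tau> (x - y) k)"
    unfolding theta_fn_theta_term by simp
  also have "\<dots> = infsum F UNIV"
    unfolding F_def by (rule infsum_mult_infsum(2)) (rule theta_summable)+
  also have "\<dots> = infsum F (range p1 \<union> range p2)"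
    by (simp only: partition(1)[symmetric])
  also have "\<dots> = infsum F (range p1) + infsum F (range p2)"
    by (rule infsum_Un_disjoint[OF summable_on_subset_banach[OF F] summable_on_subset_banach[OF F]
        partition(2)]) simp_all
  finally have split: "theta_fn \<tau> (x + y) * theta_fn \<tau> (x - y) = infsum F (range p1) + infsum F (range p2)" .
  have "F \<circ> p1 = (\<lambda>(r, s). half_theta_term \<tau> x (2 * r) * half_theta_term \<tau> y (2 * s + 1))"
    unfolding F_def p1_def by (simp add: fun_eq_iff theta_term_mult_odd)
  then have odd: "infsum F (range p1) = theta_even \<tau> x * theta_odd \<tau> y"
    unfolding infsum_reindex[OF partition(3)] theta_even_def theta_odd_def
    by (simp only: infsum_mult_infsum(2)[OF half_summable_0 half_summable_1])
  have "F \<circ> p2 = (\<lambda>z. - (\<lambda>(r, s). half_theta_term \<tau> x (2 * r + 1) * half_theta_term \<tau> y (2 * s)) z)"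
    unfolding F_def p2_def by (simp add: fun_eq_iff theta_term_mult_even)
  then have even: "infsum F (range p2) = - (theta_odd \<tau> x * theta_even \<tau> y)"
    unfolding infsum_reindex[OF partition(4)] theta_even_def theta_odd_def
    by (simp only: infsum_uminus infsum_mult_infsum(2)[OF half_summable_1 half_summable_0])
  show ?thesis
    unfolding split odd even by simp
qed

section \<open>Functions with a product formula\<close>

definition has_product_formula :: "(complex \<Rightarrow> complex) \<Rightarrow> bool" where
  "has_product_formula f \<longleftrightarrow> (\<exists>A B. \<forall>x y. f (x + y) * f (x - y) = A x * B y - B x * A y)"

lemma has_product_formula_sin: "has_product_formula (\<lambda>z. sin (of_real pi * z))"
  unfolding has_product_formula_def
proof (intro exI allI)
  fix x y :: complex
  define a where "a = of_real pi * x"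
  define b where "b = of_real pi * y"
  have "sin (of_real pi * (x + y)) * sin (of_real pi * (x - y)) = sin (a + b) * sin (a - b)"
    unfolding a_def b_def by (simp add: algebra_simps)
  also have "\<dots> = (sin a)^2 * (cos b)^2 - (cos a)^2 * (sin b)^2"
    by (simp add: sin_add sin_diff algebra_simps power2_eq_square)
  also have "\<dots> = (sin a)^2 - (sin b)^2"
    by (simp add: cos_squared_eq algebra_simps)
  finally show "sin (of_real pi * (x + y)) * sin (of_real pi * (x - y)) =
     (\<lambda>x. (sin (of_real pi * x))^2) x * (\<lambda>_. 1) y - (\<lambda>_. 1) x * (\<lambda>x. (sin (of_real pi * x))^2) y"
    unfolding a_def b_def by simp
qed

lemma has_product_formula_theta: "Im \<tau> > 0 \<Longrightarrow> has_product_formula (theta_fn \<tau>)"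
  unfolding has_product_formula_def by (blast intro: theta_product_formula)

lemma product_formula_zero:
  assumes "has_product_formula f" and "f c \<noteq> 0"
  shows "f 0 = 0"
proof -
  obtain A B where H: "\<And>x y. f (x + y) * f (x - y) = A x * B y - B x * A y"
    using assms(1) unfolding has_product_formula_def by blast
  have "f (c/2 + c/2) * f (c/2 - c/2) = 0"
    unfolding H by simp
  then show ?thesis
    using assms(2) by simp
qed

lemma product_formula_odd:
  assumes "has_product_formula f" and "f c \<noteq> 0"
  shows "f (- w) = - f w"
proof -
  obtain A B where H: "\<And>x y. f (x + y) * f (x - y) = A x * B y - B x * A y"
    using assms(1) unfolding has_product_formula_def by blast
  define x where "x = (c - w) / 2"
  define y where "y = (c + w) / 2"
  have "x + y = c" "x - y = - w" "y + x = c" "y - x = w"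
    unfolding x_def y_def by (simp_all add: field_simps)
  then have "f c * f (- w) = A x * B y - B x * A y" and "f c * f w = A y * B x - B y * A x"
    using H[of x y] H[of y x] by simp_all
  then have "f c * (f (- w) + f w) = (A x * B y - B x * A y) + (A y * B x - B y * A x)"
    by (simp only: distrib_left)
  also have "\<dots> = 0"
    by (simp add: algebra_simps)
  finally show ?thesis
    using assms(2) by (simp add: add_eq_0_iff2)
qed

text \<open>The three-term (Weierstrass) identity: each product \<open>f (x + y) * f (x - y)\<close> is an
  alternating bilinear expression in \<open>(A, B)\<close>, and three such expressions satisfy the Pluecker
  relation.\<close>

lemma product_formula_three_term:
  assumes "has_product_formula f"
  shows "f (x + y) * f (x - y) * (f (u + v) * f (u - v)) - f (x + u) * f (x - u) * (f (y + v) * f (y - v))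
       + f (x + v) * f (x - v) * (f (y + u) * f (y - u)) = 0"
proof -
  obtain A B where H: "\<And>x y. f (x + y) * f (x - y) = A x * B y - B x * A y"
    using assms unfolding has_product_formula_def by blast
  show ?thesis
    unfolding H by (simp add: algebra_simps)
qed

section \<open>Products along arithmetic progressions\<close>

text \<open>Separating a base point \<open>a\<close> from an integer offset lets all index bookkeeping happen in
  \<open>\<int>\<close>; only the four bases \<open>0\<close>, \<open>2\<eta>\<Lambda>\<close>, \<open>\<lambda>\<close> and \<open>\<lambda> - 2\<eta>\<Lambda>\<close> occur.\<close>

definition grid :: "(complex \<Rightarrow> complex) \<Rightarrow> complex \<Rightarrow> complex \<Rightarrow> int \<Rightarrow> complex" where
  "grid f \<eta> a k = f (a + 2 * \<eta> * of_int k)"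

definition grid_prod :: "(complex \<Rightarrow> complex) \<Rightarrow> complex \<Rightarrow> complex \<Rightarrow> int \<Rightarrow> nat \<Rightarrow> complex" where
  "grid_prod f \<eta> a c n = (\<Prod>m<n. grid f \<eta> a (c - int m))"

lemma epoch_eq_grid_prod:
  "b = a + 2 * \<eta> * of_int c \<Longrightarrow> epoch f \<eta> b (int n) = grid_prod f \<eta> a c n"
  unfolding epoch_def grid_prod_def grid_def by (simp add: algebra_simps)

lemma grid_prod_0 [simp]: "grid_prod f \<eta> a c 0 = 1"
  by (simp add: grid_prod_def)

text \<open>The equational premises let the peeling rules below be applied by \<open>rule\<close> to goals whose
  offsets are written in any arithmetically equivalent form.\<close>

lemma grid_prod_Suc_first:
  assumes "n = Suc k" "c' = c - 1" "d = c"
  shows "grid_prod f \<eta> a c n = grid f \<eta> a d * grid_prod f \<eta> a c' k"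
  unfolding assms grid_prod_def prod.lessThan_Suc_shift by (simp add: algebra_simps)

lemma grid_prod_Suc_last:
  assumes "n = Suc k" "c' = c" "d = c - int k"
  shows "grid_prod f \<eta> a c n = grid_prod f \<eta> a c' k * grid f \<eta> a d"
  unfolding assms grid_prod_def by simp

lemma grid_prod_shift_plus: "grid_prod f \<eta> (a + 2 * \<eta>) c n = grid_prod f \<eta> a (c + 1) n"
  unfolding grid_prod_def grid_def by (simp add: algebra_simps)

lemma grid_prod_shift_minus: "grid_prod f \<eta> (a - 2 * \<eta>) c n = grid_prod f \<eta> a (c - 1) n"
  unfolding grid_prod_def grid_def by (simp add: algebra_simps)

lemma grid_prod_slide:
  "grid_prod f \<eta> a (c + 1) m * grid f \<eta> a (c + 1 - int m) = grid f \<eta> a (c + 1) * grid_prod f \<eta> a c m"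
proof (induction m)
  case (Suc m)
  have "grid_prod f \<eta> a (c + 1) (Suc m) * grid f \<eta> a (c + 1 - int (Suc m))
      = (grid_prod f \<eta> a (c + 1) m * grid f \<eta> a (c + 1 - int m)) * grid f \<eta> a (c - int m)"
    by (simp add: grid_prod_Suc_last[OF refl refl refl] algebra_simps)
  also have "\<dots> = grid f \<eta> a (c + 1) * grid_prod f \<eta> a c (Suc m)"
    unfolding Suc.IH by (simp add: grid_prod_Suc_last[OF refl refl refl] algebra_simps)
  finally show ?case .
qed simp

lemma grid_prod_nonzero:
  "(\<And>m. m < n \<Longrightarrow> grid f \<eta> a (c - int m) \<noteq> 0) \<Longrightarrow> grid_prod f \<eta> a c n \<noteq> 0"
  unfolding grid_prod_def by simp

lemma grid_prod_0_eq_0: "f 0 = 0 \<Longrightarrow> i < j \<Longrightarrow> grid_prod f \<eta> 0 (int i) j = 0"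
  unfolding grid_prod_def grid_def by (rule prod_zero) (auto intro!: bexI[of _ i])

definition nonzero_on_coset :: "(complex \<Rightarrow> complex) \<Rightarrow> complex \<Rightarrow> complex \<Rightarrow> bool" where
  "nonzero_on_coset f \<eta> l \<longleftrightarrow> (\<forall>k::int. f (l + 2 * \<eta> * of_int k) \<noteq> 0)"

lemma nonzero_on_coset_grid: "nonzero_on_coset f \<eta> l \<Longrightarrow> grid f \<eta> l k \<noteq> 0"
  unfolding nonzero_on_coset_def grid_def by simp

lemma nonzero_on_coset_grid_prod: "nonzero_on_coset f \<eta> l \<Longrightarrow> grid_prod f \<eta> l c n \<noteq> 0"
  by (intro grid_prod_nonzero nonzero_on_coset_grid)

lemma nonzero_on_coset_shift:
  assumes "nonzero_on_coset f \<eta> l"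
  shows "nonzero_on_coset f \<eta> (l + 2 * \<eta>)" and "nonzero_on_coset f \<eta> (l - 2 * \<eta>)"
proof -
  have "l + 2 * \<eta> + 2 * \<eta> * of_int k = l + 2 * \<eta> * of_int (k + 1)"
    and "l - 2 * \<eta> + 2 * \<eta> * of_int k = l + 2 * \<eta> * of_int (k - 1)" for k
    by (simp_all add: algebra_simps)
  with assms show "nonzero_on_coset f \<eta> (l + 2 * \<eta>)" and "nonzero_on_coset f \<eta> (l - 2 * \<eta>)"
    unfolding nonzero_on_coset_def by metis+
qed

locale fusion_parameters =
  fixes f :: "complex \<Rightarrow> complex" and \<eta> \<Lambda> :: complex
  assumes product_formula: "has_product_formula f"
    and nonzero_eta: "\<And>k::int. k \<noteq> 0 \<Longrightarrow> f (2 * \<eta> * of_int k) \<noteq> 0"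
    and nonzero_Lambda: "\<And>k::int. f (2 * \<eta> * (\<Lambda> - of_int k)) \<noteq> 0"
begin

lemma f_0: "f 0 = 0"
  using product_formula_zero[OF product_formula nonzero_eta[of 1]] by simp

lemma f_minus: "f (- w) = - f w"
  using product_formula_odd[OF product_formula nonzero_eta[of 1]] by simp

lemma grid_0_nonzero: "k \<noteq> 0 \<Longrightarrow> grid f \<eta> 0 k \<noteq> 0"
  unfolding grid_def using nonzero_eta by simp

lemma grid_Lambda_nonzero: "grid f \<eta> (2 * \<eta> * \<Lambda>) k \<noteq> 0"
  using nonzero_Lambda[of "- k"] unfolding grid_def by (simp add: algebra_simps)

lemma grid_prod_0_nonzero: "int n \<le> c \<Longrightarrow> grid_prod f \<eta> 0 c n \<noteq> 0"
  by (intro grid_prod_nonzero grid_0_nonzero) simp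

lemma grid_prod_Lambda_nonzero: "grid_prod f \<eta> (2 * \<eta> * \<Lambda>) c n \<noteq> 0"
  by (intro grid_prod_nonzero grid_Lambda_nonzero)

text \<open>The two instances of the three-term identity behind the recursion of the closed form (for last
  entry \<open>1\<close> resp. \<open>0\<close> of \<open>K\<close>, see below); \<open>x, y, u, v\<close> are chosen so that all twelve arguments
  land on the grids.\<close>

lemma grid_identity_K1:
  fixes i j N :: int
  shows "grid f \<eta> 0 (i - j + 1) * grid f \<eta> 0 (N + 1) * grid f \<eta> l (i + j - N) * grid f \<eta> l 0
       = grid f \<eta> 0 (N + 1 - j) * grid f \<eta> l j * grid f \<eta> l (i - N) * grid f \<eta> 0 (i + 1)
       + grid f \<eta> 0 j * grid f \<eta> l (i + 1) * grid f \<eta> l (j - (N + 1)) * grid f \<eta> 0 (i - N)"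
proof -
  define x where "x = l + \<eta> * of_int (i + j - N)"
  define y where "y = \<eta> * of_int (i + j - N)"
  define u where "u = \<eta> * of_int (i - j + 1 + (N + 1))"
  define v where "v = \<eta> * of_int (i - j + 1 - (N + 1))"
  have "y - u = - (0 + 2 * \<eta> * of_int (N + 1 - j))"
    unfolding y_def u_def by (simp add: algebra_simps)
  then have "f (y - u) = - grid f \<eta> 0 (N + 1 - j)"
    by (simp only: grid_def f_minus)
  moreover have "f (x + y) = grid f \<eta> l (i + j - N)" "f (x - y) = grid f \<eta> l 0"
    "f (u + v) = grid f \<eta> 0 (i - j + 1)" "f (u - v) = grid f \<eta> 0 (N + 1)"
    "f (x + u) = grid f \<eta> l (i + 1)" "f (x - u) = grid f \<eta> l (j - (N + 1))"
    "f (y + v) = grid f \<eta> 0 (i - N)" "f (y - v) = grid f \<eta> 0 j"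
    "f (x + v) = grid f \<eta> l (i - N)" "f (x - v) = grid f \<eta> l j" "f (y + u) = grid f \<eta> 0 (i + 1)"
    unfolding grid_def x_def y_def u_def v_def by (simp_all add: algebra_simps)
  ultimately show ?thesis
    using product_formula_three_term[OF product_formula, of x y u v] by algebra
qed

lemma grid_identity_K0:
  fixes i j N :: int
  shows "grid f \<eta> 0 (N + 1) * grid f \<eta> (2 * \<eta> * \<Lambda>) (j - i - N) * grid f \<eta> l 0
         * grid f \<eta> (l - 2 * \<eta> * \<Lambda>) (i + j - 1)
       = grid f \<eta> 0 (N + 1 - j) * grid f \<eta> (2 * \<eta> * \<Lambda>) (- i - N) * grid f \<eta> l j
         * grid f \<eta> (l - 2 * \<eta> * \<Lambda>) (i - 1)
       + grid f \<eta> 0 j * grid f \<eta> (2 * \<eta> * \<Lambda>) (1 - i) * grid f \<eta> l (j - (N + 1))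
         * grid f \<eta> (l - 2 * \<eta> * \<Lambda>) (N + i)"
proof -
  define x where "x = l + \<eta> * of_int (i + j - 1) - \<eta> * \<Lambda>"
  define y where "y = \<eta> * of_int (i + j - 1) - \<eta> * \<Lambda>"
  define u where "u = \<eta> * \<Lambda> + \<eta> * of_int (j - i + 1)"
  define v where "v = - \<eta> * \<Lambda> + \<eta> * of_int (2 * N + 1 - j + i)"
  have "y + v = - ((2 * \<eta> * \<Lambda>) + 2 * \<eta> * of_int (- i - N))"
    and "y - v = - (0 + 2 * \<eta> * of_int (N + 1 - j))"
    and "y - u = - ((2 * \<eta> * \<Lambda>) + 2 * \<eta> * of_int (1 - i))"
    unfolding y_def u_def v_def by (simp_all add: algebra_simps)
  then have "f (y + v) = - grid f \<eta> (2 * \<eta> * \<Lambda>) (- i - N)"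
    and "f (y - v) = - grid f \<eta> 0 (N + 1 - j)"
    and "f (y - u) = - grid f \<eta> (2 * \<eta> * \<Lambda>) (1 - i)"
    by (simp_all only: grid_def f_minus)
  moreover have "f (x + y) = grid f \<eta> (l - 2 * \<eta> * \<Lambda>) (i + j - 1)" "f (x - y) = grid f \<eta> l 0"
    "f (u + v) = grid f \<eta> 0 (N + 1)" "f (u - v) = grid f \<eta> (2 * \<eta> * \<Lambda>) (j - i - N)"
    "f (x + u) = grid f \<eta> l j" "f (x - u) = grid f \<eta> (l - 2 * \<eta> * \<Lambda>) (i - 1)"
    "f (x + v) = grid f \<eta> (l - 2 * \<eta> * \<Lambda>) (N + i)" "f (x - v) = grid f \<eta> l (j - (N + 1))"
    "f (y + u) = grid f \<eta> 0 j"
    unfolding grid_def x_def y_def u_def v_def by (simp_all add: algebra_simps)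
  ultimately show ?thesis
    using product_formula_three_term[OF product_formula, of x y u v] by algebra
qed

end

text \<open>With \<open>v = -\<eta>\<Lambda>\<close>, the \<open>(n+1)\<close>-st vertex of a column carries the spectral parameter
  \<open>-\<eta>\<Lambda> + 2\<eta>n\<close>; there every factor of the vertex weight is a value of \<open>f\<close> on one of the four
  grids.\<close>

lemma W1_special_J0_K0:
  assumes "0 \<le> k" "d = - k - int n"
  shows "W1 f \<eta> \<Lambda> k 0 k 0 (- \<eta> * \<Lambda> + 2 * \<eta> * of_nat n) l
    = grid f \<eta> (2 * \<eta> * \<Lambda>) d * grid f \<eta> l k / (grid f \<eta> (2 * \<eta> * \<Lambda>) (- int n) * grid f \<eta> l 0)"
  using assms(1) unfolding assms(2) W1_def grid_def by (simp add: algebra_simps)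

lemma W1_special_J1_K0:
  assumes "0 \<le> k" "k' = k + 1" "d = k + 1 + int n"
  shows "W1 f \<eta> \<Lambda> k 1 k' 0 (- \<eta> * \<Lambda> + 2 * \<eta> * of_nat n) l
    = grid f \<eta> (l - 2 * \<eta> * \<Lambda>) d * grid f \<eta> 0 1 / (grid f \<eta> (2 * \<eta> * \<Lambda>) (- int n) * grid f \<eta> l 0)"
  using assms(1) unfolding assms(2,3) W1_def grid_def by (simp add: algebra_simps)

lemma W1_special_J0_K1:
  assumes "1 \<le> k" "k' = k - 1" "d = k - 1 - int n" "d' = 1 - k"
  shows "W1 f \<eta> \<Lambda> k 0 k' 1 (- \<eta> * \<Lambda> + 2 * \<eta> * of_nat n) l
    = grid f \<eta> l d * grid f \<eta> (2 * \<eta> * \<Lambda>) d' * grid f \<eta> 0 k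
      / (grid f \<eta> (2 * \<eta> * \<Lambda>) (- int n) * grid f \<eta> l 0 * grid f \<eta> 0 1)"
  using assms(1) unfolding assms(2-4) W1_def grid_def by (simp add: algebra_simps)

lemma W1_special_J1_K1:
  assumes "0 \<le> k" "d = k - int n"
  shows "W1 f \<eta> \<Lambda> k 1 k 1 (- \<eta> * \<Lambda> + 2 * \<eta> * of_nat n) l
    = grid f \<eta> 0 d * grid f \<eta> (l - 2 * \<eta> * \<Lambda>) k / (grid f \<eta> (2 * \<eta> * \<Lambda>) (- int n) * grid f \<eta> l 0)"
  using assms(1) unfolding assms(2) W1_def grid_def by (simp add: algebra_simps)

section \<open>The closed form and its recursion\<close>

text \<open>\<open>fused_formula\<close> is the right-hand side of the theorem in grid notation (see
  \<open>epoch_expression_eq_fused_formula\<close>). Its factor \<open>fused_unit\<close> never vanishes for generic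
  parameters; the two remaining products may: the one on the base \<open>0\<close> is the indicator of
  \<open>j\<^sub>2 \<le> i\<^sub>1\<close>, and nothing is assumed about \<open>f\<close> on \<open>\<lambda> - 2\<eta>\<Lambda> + 2\<eta>\<int>\<close>.\<close>

definition fused_unit :: "(complex \<Rightarrow> complex) \<Rightarrow> complex \<Rightarrow> complex \<Rightarrow> nat \<Rightarrow> nat \<Rightarrow> nat \<Rightarrow> nat \<Rightarrow> nat \<Rightarrow> complex \<Rightarrow> complex" where
  "fused_unit f \<eta> \<Lambda> n i1 j1 i2 j2 l =
     grid f \<eta> 0 1 powi (int i2 - int i1)
   * (grid_prod f \<eta> 0 (int n) n / (grid_prod f \<eta> 0 (int j1) j1 * grid_prod f \<eta> 0 (int n - int j1) (n - j1)))
   * (grid_prod f \<eta> (2 * \<eta> * \<Lambda>) 0 i1 / grid_prod f \<eta> (2 * \<eta> * \<Lambda>) 0 i2)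
   * (grid_prod f \<eta> (2 * \<eta> * \<Lambda>) (- int i1) (n - j2) / grid_prod f \<eta> (2 * \<eta> * \<Lambda>) 0 n)
   * (grid_prod f \<eta> l (int i2) (n - j1) / (grid_prod f \<eta> l (int j1) (n - j1) * grid_prod f \<eta> l (2 * int j1 - int n - 1) j1))"

definition fused_formula :: "(complex \<Rightarrow> complex) \<Rightarrow> complex \<Rightarrow> complex \<Rightarrow> nat \<Rightarrow> nat \<Rightarrow> nat \<Rightarrow> nat \<Rightarrow> nat \<Rightarrow> complex \<Rightarrow> complex" where
  "fused_formula f \<eta> \<Lambda> n i1 j1 i2 j2 l = fused_unit f \<eta> \<Lambda> n i1 j1 i2 j2 l * grid_prod f \<eta> 0 (int i1) j2
      * grid_prod f \<eta> (l - 2 * \<eta> * \<Lambda>) (int i2 + int j1 - 1) j1"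

context fusion_parameters
begin

lemmas grid_nonzero = grid_0_nonzero grid_Lambda_nonzero grid_prod_0_nonzero grid_prod_Lambda_nonzero
  nonzero_on_coset_grid nonzero_on_coset_grid_prod

text \<open>Suffix \<open>_Ja_Kb\<close>: the last vertex of the column has entries \<open>a\<close> in \<open>J\<^sub>1\<close> and \<open>b\<close> in \<open>K\<close>.\<close>

lemma fused_unit_step_J0_K0:
  assumes l: "nonzero_on_coset f \<eta> l"
    and j1: "j1 \<le> n" and j2: "j2 \<le> n" and cons: "i1 + j1 = i2 + j2"
  shows "fused_unit f \<eta> \<Lambda> n i1 j1 i2 j2 (l - 2 * \<eta>)
       * (grid f \<eta> (2 * \<eta> * \<Lambda>) (- int i2 - int n) * grid f \<eta> l (int i2) / (grid f \<eta> (2 * \<eta> * \<Lambda>) (- int n) * grid f \<eta> l 0))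
     = fused_unit f \<eta> \<Lambda> (Suc n) i1 j1 i2 j2 l
       * (grid f \<eta> 0 (int n + 1 - int j1) * grid f \<eta> (2 * \<eta> * \<Lambda>) (- int i2 - int n) * grid f \<eta> l (int j1)
          / (grid f \<eta> 0 (int n + 1) * grid f \<eta> (2 * \<eta> * \<Lambda>) (int j1 - int i2 - int n) * grid f \<eta> l 0))"
proof -
  have peel:
    "grid_prod f \<eta> 0 (int (Suc n)) (Suc n) = grid f \<eta> 0 (int n + 1) * grid_prod f \<eta> 0 (int n) n"
    "grid_prod f \<eta> 0 (int (Suc n) - int j1) (Suc n - j1) = grid f \<eta> 0 (int n + 1 - int j1) * grid_prod f \<eta> 0 (int n - int j1) (n - j1)"
    "grid_prod f \<eta> (2 * \<eta> * \<Lambda>) (- int i1) (Suc n - j2) = grid_prod f \<eta> (2 * \<eta> * \<Lambda>) (- int i1) (n - j2) * grid f \<eta> (2 * \<eta> * \<Lambda>) (int j1 - int i2 - int n)"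
    "grid_prod f \<eta> (2 * \<eta> * \<Lambda>) 0 (Suc n) = grid_prod f \<eta> (2 * \<eta> * \<Lambda>) 0 n * grid f \<eta> (2 * \<eta> * \<Lambda>) (- int n)"
    "grid_prod f \<eta> l (int i2) (Suc n - j1) = grid f \<eta> l (int i2) * grid_prod f \<eta> l (int i2 - 1) (n - j1)"
    "grid_prod f \<eta> l (int j1) (Suc n - j1) = grid f \<eta> l (int j1) * grid_prod f \<eta> l (int j1 - 1) (n - j1)"
    using j1 j2 cons by (auto intro: grid_prod_Suc_first grid_prod_Suc_last)
  show ?thesis
    unfolding fused_unit_def grid_prod_shift_minus peel
    using j1 l grid_nonzero by (simp add: field_simps)
qed

lemma fused_unit_step_J1_K0:
  assumes l: "nonzero_on_coset f \<eta> l"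
    and j1: "j1 = Suc a" "j1 \<le> Suc n" and i2: "i2 = Suc b" and j2: "j2 \<le> n" and cons: "i1 + j1 = i2 + j2"
  shows "fused_unit f \<eta> \<Lambda> n i1 a b j2 (l + 2 * \<eta>)
       * (grid f \<eta> 0 1 / (grid f \<eta> (2 * \<eta> * \<Lambda>) (- int n) * grid f \<eta> l 0))
     = fused_unit f \<eta> \<Lambda> (Suc n) i1 j1 i2 j2 l
       * (grid f \<eta> 0 (int j1) * grid f \<eta> (2 * \<eta> * \<Lambda>) (1 - int i2) * grid f \<eta> l (int j1 - (int n + 1))
          / (grid f \<eta> 0 (int n + 1) * grid f \<eta> (2 * \<eta> * \<Lambda>) (int j1 - int i2 - int n) * grid f \<eta> l 0))"
proof -
  have power: "grid f \<eta> 0 1 powi (int i2 - int i1) = grid f \<eta> 0 1 powi (int b - int i1) * grid f \<eta> 0 1"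
    using i2 grid_0_nonzero[of 1] power_int_add_1[of "grid f \<eta> 0 1" "int b - int i1"] by (simp add: algebra_simps)
  have peel:
    "grid_prod f \<eta> 0 (int (Suc n)) (Suc n) = grid f \<eta> 0 (int n + 1) * grid_prod f \<eta> 0 (int n) n"
    "grid_prod f \<eta> 0 (int j1) j1 = grid f \<eta> 0 (int j1) * grid_prod f \<eta> 0 (int a) a"
    "grid_prod f \<eta> 0 (int (Suc n) - int j1) (Suc n - j1) = grid_prod f \<eta> 0 (int n - int a) (n - a)"
    "grid_prod f \<eta> (2 * \<eta> * \<Lambda>) 0 i2 = grid_prod f \<eta> (2 * \<eta> * \<Lambda>) 0 b * grid f \<eta> (2 * \<eta> * \<Lambda>) (1 - int i2)"
    "grid_prod f \<eta> (2 * \<eta> * \<Lambda>) (- int i1) (Suc n - j2) = grid_prod f \<eta> (2 * \<eta> * \<Lambda>) (- int i1) (n - j2) * grid f \<eta> (2 * \<eta> * \<Lambda>) (int j1 - int i2 - int n)"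
    "grid_prod f \<eta> (2 * \<eta> * \<Lambda>) 0 (Suc n) = grid_prod f \<eta> (2 * \<eta> * \<Lambda>) 0 n * grid f \<eta> (2 * \<eta> * \<Lambda>) (- int n)"
    "grid_prod f \<eta> l (int i2) (Suc n - j1) = grid_prod f \<eta> l (int b + 1) (n - a)"
    "grid_prod f \<eta> l (int j1) (Suc n - j1) = grid_prod f \<eta> l (int a + 1) (n - a)"
    "grid_prod f \<eta> l (2 * int j1 - int (Suc n) - 1) j1 = grid_prod f \<eta> l (2 * int a - int n - 1 + 1) a * grid f \<eta> l (int j1 - (int n + 1))"
    using j1 i2 j2 cons by (auto intro: grid_prod_Suc_first grid_prod_Suc_last simp: add.commute)
  show ?thesis
    unfolding fused_unit_def grid_prod_shift_plus power peel
    using j1 l grid_nonzero by (simp add: field_simps)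
qed

lemma fused_unit_step_J0_K1:
  assumes l: "nonzero_on_coset f \<eta> l"
    and j1: "j1 \<le> n" and j2: "j2 = Suc c" "j2 \<le> Suc n"
  shows "fused_unit f \<eta> \<Lambda> n i1 j1 (Suc i2) c (l - 2 * \<eta>)
       * (grid f \<eta> l (int i2 - int n) * grid f \<eta> (2 * \<eta> * \<Lambda>) (- int i2) * grid f \<eta> 0 (int i2 + 1)
          / (grid f \<eta> (2 * \<eta> * \<Lambda>) (- int n) * grid f \<eta> l 0 * grid f \<eta> 0 1))
     = fused_unit f \<eta> \<Lambda> (Suc n) i1 j1 i2 j2 l
       * (grid f \<eta> 0 (int n + 1 - int j1) * grid f \<eta> l (int j1) * grid f \<eta> l (int i2 - int n) * grid f \<eta> 0 (int i2 + 1)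
          / (grid f \<eta> 0 (int n + 1) * grid f \<eta> l (int i2 + int j1 - int n) * grid f \<eta> l 0))"
proof -
  have power: "grid f \<eta> 0 1 powi (int (Suc i2) - int i1) = grid f \<eta> 0 1 powi (int i2 - int i1) * grid f \<eta> 0 1"
    using grid_0_nonzero[of 1] power_int_add_1[of "grid f \<eta> 0 1" "int i2 - int i1"] by (simp add: algebra_simps)
  have peel:
    "grid_prod f \<eta> 0 (int (Suc n)) (Suc n) = grid f \<eta> 0 (int n + 1) * grid_prod f \<eta> 0 (int n) n"
    "grid_prod f \<eta> 0 (int (Suc n) - int j1) (Suc n - j1) = grid f \<eta> 0 (int n + 1 - int j1) * grid_prod f \<eta> 0 (int n - int j1) (n - j1)"
    "grid_prod f \<eta> (2 * \<eta> * \<Lambda>) 0 (Suc i2) = grid_prod f \<eta> (2 * \<eta> * \<Lambda>) 0 i2 * grid f \<eta> (2 * \<eta> * \<Lambda>) (- int i2)"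
    "grid_prod f \<eta> (2 * \<eta> * \<Lambda>) (- int i1) (Suc n - j2) = grid_prod f \<eta> (2 * \<eta> * \<Lambda>) (- int i1) (n - c)"
    "grid_prod f \<eta> (2 * \<eta> * \<Lambda>) 0 (Suc n) = grid_prod f \<eta> (2 * \<eta> * \<Lambda>) 0 n * grid f \<eta> (2 * \<eta> * \<Lambda>) (- int n)"
    "grid_prod f \<eta> l (int i2) (Suc n - j1) = grid_prod f \<eta> l (int (Suc i2) - 1) (n - j1) * grid f \<eta> l (int i2 + int j1 - int n)"
    "grid_prod f \<eta> l (int j1) (Suc n - j1) = grid f \<eta> l (int j1) * grid_prod f \<eta> l (int j1 - 1) (n - j1)"
    using j1 j2 by (auto intro: grid_prod_Suc_first grid_prod_Suc_last)
  show ?thesis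
    unfolding fused_unit_def grid_prod_shift_minus power peel
    using j1 l grid_nonzero by (simp add: field_simps)
qed

lemma fused_unit_step_J1_K1:
  assumes l: "nonzero_on_coset f \<eta> l"
    and j1: "j1 = Suc a" "j1 \<le> Suc n" and j2: "j2 = Suc c" "j2 \<le> Suc n"
  shows "fused_unit f \<eta> \<Lambda> n i1 a i2 c (l + 2 * \<eta>)
       * (grid f \<eta> 0 (int i2 - int n) / (grid f \<eta> (2 * \<eta> * \<Lambda>) (- int n) * grid f \<eta> l 0))
     = fused_unit f \<eta> \<Lambda> (Suc n) i1 j1 i2 j2 l
       * (grid f \<eta> 0 (int j1) * grid f \<eta> l (int i2 + 1) * grid f \<eta> l (int j1 - (int n + 1)) * grid f \<eta> 0 (int i2 - int n)
          / (grid f \<eta> 0 (int n + 1) * grid f \<eta> l (int i2 + int j1 - int n) * grid f \<eta> l 0))"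
proof -
  have "int i2 + 1 - int (n - a) = int i2 + int j1 - int n"
    using j1 by (simp add: of_nat_diff)
  then have "grid_prod f \<eta> l (int i2 + 1) (n - a) * grid f \<eta> l (int i2 + int j1 - int n)
      = grid f \<eta> l (int i2 + 1) * grid_prod f \<eta> l (int i2) (n - a)"
    using grid_prod_slide[of f \<eta> l "int i2" "n - a"] by (simp only:)
  then have slide: "grid_prod f \<eta> l (int i2) (Suc n - j1)
      = grid_prod f \<eta> l (int i2 + 1) (n - a) * grid f \<eta> l (int i2 + int j1 - int n) / grid f \<eta> l (int i2 + 1)"
    using j1 nonzero_on_coset_grid[OF l, of "int i2 + 1"] by (simp add: field_simps)
  have peel:
    "grid_prod f \<eta> 0 (int (Suc n)) (Suc n) = grid f \<eta> 0 (int n + 1) * grid_prod f \<eta> 0 (int n) n"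
    "grid_prod f \<eta> 0 (int j1) j1 = grid f \<eta> 0 (int j1) * grid_prod f \<eta> 0 (int a) a"
    "grid_prod f \<eta> 0 (int (Suc n) - int j1) (Suc n - j1) = grid_prod f \<eta> 0 (int n - int a) (n - a)"
    "grid_prod f \<eta> (2 * \<eta> * \<Lambda>) (- int i1) (Suc n - j2) = grid_prod f \<eta> (2 * \<eta> * \<Lambda>) (- int i1) (n - c)"
    "grid_prod f \<eta> (2 * \<eta> * \<Lambda>) 0 (Suc n) = grid_prod f \<eta> (2 * \<eta> * \<Lambda>) 0 n * grid f \<eta> (2 * \<eta> * \<Lambda>) (- int n)"
    "grid_prod f \<eta> l (int j1) (Suc n - j1) = grid_prod f \<eta> l (int a + 1) (n - a)"
    "grid_prod f \<eta> l (2 * int j1 - int (Suc n) - 1) j1 = grid_prod f \<eta> l (2 * int a - int n - 1 + 1) a * grid f \<eta> l (int j1 - (int n + 1))"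
    using j1 j2 by (auto intro: grid_prod_Suc_first grid_prod_Suc_last simp: add.commute)
  show ?thesis
    unfolding fused_unit_def grid_prod_shift_plus slide peel
    using j1 l grid_nonzero by (simp add: field_simps)
qed

lemma fused_formula_term_J0_K0:
  assumes l: "nonzero_on_coset f \<eta> l"
    and j1: "1 \<le> j1" "j1 \<le> n" and j2: "j2 \<le> n" and cons: "i1 + j1 = i2 + j2"
  shows "fused_formula f \<eta> \<Lambda> n i1 j1 i2 j2 (l - 2 * \<eta>)
       * W1 f \<eta> \<Lambda> (int i2) 0 (int i2) 0 (- \<eta> * \<Lambda> + 2 * \<eta> * of_nat n) l
     = fused_unit f \<eta> \<Lambda> (Suc n) i1 j1 i2 j2 l * grid_prod f \<eta> 0 (int i1) j2
       * (grid f \<eta> 0 (int n + 1 - int j1) * grid f \<eta> (2 * \<eta> * \<Lambda>) (- int i2 - int n) * grid f \<eta> l (int j1)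
          / (grid f \<eta> 0 (int n + 1) * grid f \<eta> (2 * \<eta> * \<Lambda>) (int j1 - int i2 - int n) * grid f \<eta> l 0))
       * (grid_prod f \<eta> (l - 2 * \<eta> * \<Lambda>) (int i2 + int j1 - 2) (j1 - 1)
          * grid f \<eta> (l - 2 * \<eta> * \<Lambda>) (int i2 - 1))"
proof -
  have base: "l - 2 * \<eta> - 2 * \<eta> * \<Lambda> = (l - 2 * \<eta> * \<Lambda>) - 2 * \<eta>"
    by simp
  have shifted: "grid_prod f \<eta> (l - 2 * \<eta> - 2 * \<eta> * \<Lambda>) (int i2 + int j1 - 1) j1
      = grid_prod f \<eta> (l - 2 * \<eta> * \<Lambda>) (int i2 + int j1 - 2) (j1 - 1) * grid f \<eta> (l - 2 * \<eta> * \<Lambda>) (int i2 - 1)"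
    unfolding base grid_prod_shift_minus by (rule grid_prod_Suc_last) (use j1 in simp_all)
  have "fused_formula f \<eta> \<Lambda> n i1 j1 i2 j2 (l - 2 * \<eta>)
       * W1 f \<eta> \<Lambda> (int i2) 0 (int i2) 0 (- \<eta> * \<Lambda> + 2 * \<eta> * of_nat n) l
     = (fused_unit f \<eta> \<Lambda> n i1 j1 i2 j2 (l - 2 * \<eta>)
       * (grid f \<eta> (2 * \<eta> * \<Lambda>) (- int i2 - int n) * grid f \<eta> l (int i2)
          / (grid f \<eta> (2 * \<eta> * \<Lambda>) (- int n) * grid f \<eta> l 0)))
       * grid_prod f \<eta> 0 (int i1) j2
       * (grid_prod f \<eta> (l - 2 * \<eta> * \<Lambda>) (int i2 + int j1 - 2) (j1 - 1) * grid f \<eta> (l - 2 * \<eta> * \<Lambda>) (int i2 - 1))"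
    unfolding fused_formula_def W1_special_J0_K0[OF of_nat_0_le_iff refl] shifted by (simp only: mult_ac)
  then show ?thesis
    unfolding fused_unit_step_J0_K0[OF l j1(2) j2 cons] by (simp only: mult_ac)
qed

lemma fused_formula_term_J1_K0:
  assumes l: "nonzero_on_coset f \<eta> l"
    and j1: "1 \<le> j1" "j1 \<le> Suc n" and i2: "1 \<le> i2" and j2: "j2 \<le> n" and cons: "i1 + j1 = i2 + j2"
  shows "fused_formula f \<eta> \<Lambda> n i1 (j1 - 1) (i2 - 1) j2 (l + 2 * \<eta>)
       * W1 f \<eta> \<Lambda> (int i2 - 1) 1 (int i2) 0 (- \<eta> * \<Lambda> + 2 * \<eta> * of_nat n) l
     = fused_unit f \<eta> \<Lambda> (Suc n) i1 j1 i2 j2 l * grid_prod f \<eta> 0 (int i1) j2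
       * (grid f \<eta> 0 (int j1) * grid f \<eta> (2 * \<eta> * \<Lambda>) (1 - int i2) * grid f \<eta> l (int j1 - (int n + 1))
          / (grid f \<eta> 0 (int n + 1) * grid f \<eta> (2 * \<eta> * \<Lambda>) (int j1 - int i2 - int n) * grid f \<eta> l 0))
       * (grid_prod f \<eta> (l - 2 * \<eta> * \<Lambda>) (int i2 + int j1 - 2) (j1 - 1)
          * grid f \<eta> (l - 2 * \<eta> * \<Lambda>) (int n + int i2))"
proof -
  obtain a b where a: "j1 = Suc a" and b: "i2 = Suc b"
    using j1 i2 by (metis Suc_le_D One_nat_def)
  then have ab: "j1 - 1 = a" "i2 - 1 = b"
    by simp_all
  have base: "l + 2 * \<eta> - 2 * \<eta> * \<Lambda> = (l - 2 * \<eta> * \<Lambda>) + 2 * \<eta>"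
    by simp
  have shifted: "grid_prod f \<eta> (l + 2 * \<eta> - 2 * \<eta> * \<Lambda>) (int b + int a - 1) a
      = grid_prod f \<eta> (l - 2 * \<eta> * \<Lambda>) (int i2 + int j1 - 2) a"
    unfolding base grid_prod_shift_plus using a b by simp
  have W: "W1 f \<eta> \<Lambda> (int i2 - 1) 1 (int i2) 0 (- \<eta> * \<Lambda> + 2 * \<eta> * of_nat n) l
      = grid f \<eta> (l - 2 * \<eta> * \<Lambda>) (int n + int i2) * grid f \<eta> 0 1
        / (grid f \<eta> (2 * \<eta> * \<Lambda>) (- int n) * grid f \<eta> l 0)"
    by (rule W1_special_J1_K0) (use i2 in simp_all)
  have "fused_formula f \<eta> \<Lambda> n i1 (j1 - 1) (i2 - 1) j2 (l + 2 * \<eta>)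
       * W1 f \<eta> \<Lambda> (int i2 - 1) 1 (int i2) 0 (- \<eta> * \<Lambda> + 2 * \<eta> * of_nat n) l
     = (fused_unit f \<eta> \<Lambda> n i1 a b j2 (l + 2 * \<eta>)
       * (grid f \<eta> 0 1 / (grid f \<eta> (2 * \<eta> * \<Lambda>) (- int n) * grid f \<eta> l 0)))
       * grid_prod f \<eta> 0 (int i1) j2
       * (grid_prod f \<eta> (l - 2 * \<eta> * \<Lambda>) (int i2 + int j1 - 2) (j1 - 1)
          * grid f \<eta> (l - 2 * \<eta> * \<Lambda>) (int n + int i2))"
    unfolding ab fused_formula_def W shifted by (simp only: mult_ac times_divide_eq_right times_divide_eq_left)
  then show ?thesis
    unfolding fused_unit_step_J1_K0[OF l a j1(2) b j2 cons] by (simp only: mult_ac)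
qed

lemma fused_formula_term_J0_K1:
  assumes l: "nonzero_on_coset f \<eta> l"
    and j1: "j1 \<le> n" and j2: "1 \<le> j2" "j2 \<le> Suc n"
  shows "fused_formula f \<eta> \<Lambda> n i1 j1 (Suc i2) (j2 - 1) (l - 2 * \<eta>)
       * W1 f \<eta> \<Lambda> (int i2 + 1) 0 (int i2) 1 (- \<eta> * \<Lambda> + 2 * \<eta> * of_nat n) l
     = fused_unit f \<eta> \<Lambda> (Suc n) i1 j1 i2 j2 l * grid_prod f \<eta> 0 (int i1) (j2 - 1)
       * (grid f \<eta> 0 (int n + 1 - int j1) * grid f \<eta> l (int j1) * grid f \<eta> l (int i2 - int n) * grid f \<eta> 0 (int i2 + 1)
          / (grid f \<eta> 0 (int n + 1) * grid f \<eta> l (int i2 + int j1 - int n) * grid f \<eta> l 0))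
       * grid_prod f \<eta> (l - 2 * \<eta> * \<Lambda>) (int i2 + int j1 - 1) j1"
proof -
  obtain c where c: "j2 = Suc c"
    using j2 by (metis Suc_le_D One_nat_def)
  have base: "l - 2 * \<eta> - 2 * \<eta> * \<Lambda> = (l - 2 * \<eta> * \<Lambda>) - 2 * \<eta>"
    by simp
  have shifted: "grid_prod f \<eta> (l - 2 * \<eta> - 2 * \<eta> * \<Lambda>) (int (Suc i2) + int j1 - 1) j1
      = grid_prod f \<eta> (l - 2 * \<eta> * \<Lambda>) (int i2 + int j1 - 1) j1"
    unfolding base grid_prod_shift_minus by simp
  have W: "W1 f \<eta> \<Lambda> (int i2 + 1) 0 (int i2) 1 (- \<eta> * \<Lambda> + 2 * \<eta> * of_nat n) l
      = grid f \<eta> l (int i2 - int n) * grid f \<eta> (2 * \<eta> * \<Lambda>) (- int i2) * grid f \<eta> 0 (int i2 + 1)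
        / (grid f \<eta> (2 * \<eta> * \<Lambda>) (- int n) * grid f \<eta> l 0 * grid f \<eta> 0 1)"
    by (rule W1_special_J0_K1) simp_all
  have "fused_formula f \<eta> \<Lambda> n i1 j1 (Suc i2) (j2 - 1) (l - 2 * \<eta>)
       * W1 f \<eta> \<Lambda> (int i2 + 1) 0 (int i2) 1 (- \<eta> * \<Lambda> + 2 * \<eta> * of_nat n) l
     = (fused_unit f \<eta> \<Lambda> n i1 j1 (Suc i2) c (l - 2 * \<eta>)
       * (grid f \<eta> l (int i2 - int n) * grid f \<eta> (2 * \<eta> * \<Lambda>) (- int i2) * grid f \<eta> 0 (int i2 + 1)
          / (grid f \<eta> (2 * \<eta> * \<Lambda>) (- int n) * grid f \<eta> l 0 * grid f \<eta> 0 1)))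
       * grid_prod f \<eta> 0 (int i1) (j2 - 1) * grid_prod f \<eta> (l - 2 * \<eta> * \<Lambda>) (int i2 + int j1 - 1) j1"
    unfolding fused_formula_def W shifted c diff_Suc_1 by (simp only: mult_ac)
  then show ?thesis
    unfolding fused_unit_step_J0_K1[OF l j1 c j2(2)] by (simp only: mult_ac)
qed

lemma fused_formula_term_J1_K1:
  assumes l: "nonzero_on_coset f \<eta> l"
    and j1: "1 \<le> j1" "j1 \<le> Suc n" and j2: "1 \<le> j2" "j2 \<le> Suc n"
  shows "fused_formula f \<eta> \<Lambda> n i1 (j1 - 1) i2 (j2 - 1) (l + 2 * \<eta>)
       * W1 f \<eta> \<Lambda> (int i2) 1 (int i2) 1 (- \<eta> * \<Lambda> + 2 * \<eta> * of_nat n) l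
     = fused_unit f \<eta> \<Lambda> (Suc n) i1 j1 i2 j2 l * grid_prod f \<eta> 0 (int i1) (j2 - 1)
       * (grid f \<eta> 0 (int j1) * grid f \<eta> l (int i2 + 1) * grid f \<eta> l (int j1 - (int n + 1)) * grid f \<eta> 0 (int i2 - int n)
          / (grid f \<eta> 0 (int n + 1) * grid f \<eta> l (int i2 + int j1 - int n) * grid f \<eta> l 0))
       * grid_prod f \<eta> (l - 2 * \<eta> * \<Lambda>) (int i2 + int j1 - 1) j1"
proof -
  obtain a c where a: "j1 = Suc a" and c: "j2 = Suc c"
    using j1 j2 by (metis Suc_le_D One_nat_def)
  have base: "l + 2 * \<eta> - 2 * \<eta> * \<Lambda> = (l - 2 * \<eta> * \<Lambda>) + 2 * \<eta>"
    by simp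
  have shifted: "grid_prod f \<eta> (l + 2 * \<eta> - 2 * \<eta> * \<Lambda>) (int i2 + int a - 1) a
      * grid f \<eta> (l - 2 * \<eta> * \<Lambda>) (int i2)
      = grid_prod f \<eta> (l - 2 * \<eta> * \<Lambda>) (int i2 + int j1 - 1) j1"
    unfolding base grid_prod_shift_plus by (rule grid_prod_Suc_last[symmetric]) (use a in simp_all)
  have W: "W1 f \<eta> \<Lambda> (int i2) 1 (int i2) 1 (- \<eta> * \<Lambda> + 2 * \<eta> * of_nat n) l
      = grid f \<eta> 0 (int i2 - int n) * grid f \<eta> (l - 2 * \<eta> * \<Lambda>) (int i2)
        / (grid f \<eta> (2 * \<eta> * \<Lambda>) (- int n) * grid f \<eta> l 0)"
    by (rule W1_special_J1_K1) simp_all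
  have "fused_formula f \<eta> \<Lambda> n i1 (j1 - 1) i2 (j2 - 1) (l + 2 * \<eta>)
       * W1 f \<eta> \<Lambda> (int i2) 1 (int i2) 1 (- \<eta> * \<Lambda> + 2 * \<eta> * of_nat n) l
     = (fused_unit f \<eta> \<Lambda> n i1 a i2 c (l + 2 * \<eta>)
       * (grid f \<eta> 0 (int i2 - int n) / (grid f \<eta> (2 * \<eta> * \<Lambda>) (- int n) * grid f \<eta> l 0)))
       * grid_prod f \<eta> 0 (int i1) (j2 - 1)
       * (grid_prod f \<eta> (l + 2 * \<eta> - 2 * \<eta> * \<Lambda>) (int i2 + int a - 1) a
          * grid f \<eta> (l - 2 * \<eta> * \<Lambda>) (int i2))"
    unfolding fused_formula_def W a c diff_Suc_1
    by (simp only: mult_ac times_divide_eq_right times_divide_eq_left)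
  then show ?thesis
    unfolding fused_unit_step_J1_K1[OF l a j1(2) c j2(2)] shifted by (simp only: mult_ac)
qed

text \<open>The three-term identity splits the factor \<open>f (\<lambda> - 2\<eta>\<Lambda> + 2\<eta>(i\<^sub>2 + j\<^sub>1 - 1))\<close> of the closed
  form into the contributions of the two possible last entries of \<open>J\<^sub>1\<close>.\<close>

lemma fused_formula_step_K0_interior:
  assumes l: "nonzero_on_coset f \<eta> l"
    and j2: "j2 \<le> n" and j1: "1 \<le> j1" "j1 \<le> Suc n" and i2: "1 \<le> i2" and cons: "i1 + j1 = i2 + j2"
  shows "fused_formula f \<eta> \<Lambda> (Suc n) i1 j1 i2 j2 l =
     (if j1 \<le> n then fused_formula f \<eta> \<Lambda> n i1 j1 i2 j2 (l - 2 * \<eta>)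
        * W1 f \<eta> \<Lambda> (int i2) 0 (int i2) 0 (- \<eta> * \<Lambda> + 2 * \<eta> * of_nat n) l else 0)
   + fused_formula f \<eta> \<Lambda> n i1 (j1 - 1) (i2 - 1) j2 (l + 2 * \<eta>)
        * W1 f \<eta> \<Lambda> (int i2 - 1) 1 (int i2) 0 (- \<eta> * \<Lambda> + 2 * \<eta> * of_nat n) l"
proof -
  define R where "R = fused_unit f \<eta> \<Lambda> (Suc n) i1 j1 i2 j2 l * grid_prod f \<eta> 0 (int i1) j2"
  define C where "C = grid_prod f \<eta> (l - 2 * \<eta> * \<Lambda>) (int i2 + int j1 - 2) (j1 - 1)"
  define D where "D = grid f \<eta> 0 (int n + 1) * grid f \<eta> (2 * \<eta> * \<Lambda>) (int j1 - int i2 - int n) * grid f \<eta> l 0"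
  define t0 where "t0 = grid f \<eta> 0 (int n + 1 - int j1) * grid f \<eta> (2 * \<eta> * \<Lambda>) (- int i2 - int n) * grid f \<eta> l (int j1)"
  define t1 where "t1 = grid f \<eta> 0 (int j1) * grid f \<eta> (2 * \<eta> * \<Lambda>) (1 - int i2) * grid f \<eta> l (int j1 - (int n + 1))"
  have "D \<noteq> 0"
    unfolding D_def using l grid_nonzero by simp
  then have identity: "grid f \<eta> (l - 2 * \<eta> * \<Lambda>) (int i2 + int j1 - 1)
      = t0 / D * grid f \<eta> (l - 2 * \<eta> * \<Lambda>) (int i2 - 1) + t1 / D * grid f \<eta> (l - 2 * \<eta> * \<Lambda>) (int n + int i2)"
    using grid_identity_K0[where i = "int i2" and j = "int j1" and N = "int n" and l = l]
    unfolding D_def t0_def t1_def by (simp add: field_simps)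
  have "grid_prod f \<eta> (l - 2 * \<eta> * \<Lambda>) (int i2 + int j1 - 1) j1
      = grid f \<eta> (l - 2 * \<eta> * \<Lambda>) (int i2 + int j1 - 1) * C"
    unfolding C_def by (rule grid_prod_Suc_first) (use j1 in simp_all)
  then have lhs: "fused_formula f \<eta> \<Lambda> (Suc n) i1 j1 i2 j2 l
      = R * (grid f \<eta> (l - 2 * \<eta> * \<Lambda>) (int i2 + int j1 - 1) * C)"
    unfolding fused_formula_def R_def by (simp only: mult_ac)
  have "\<not> j1 \<le> n \<Longrightarrow> int n + 1 - int j1 = 0"
    using j1 by simp
  then have term0: "(if j1 \<le> n then fused_formula f \<eta> \<Lambda> n i1 j1 i2 j2 (l - 2 * \<eta>)
      * W1 f \<eta> \<Lambda> (int i2) 0 (int i2) 0 (- \<eta> * \<Lambda> + 2 * \<eta> * of_nat n) l else 0)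
    = R * (t0 / D) * (C * grid f \<eta> (l - 2 * \<eta> * \<Lambda>) (int i2 - 1))"
    using fused_formula_term_J0_K0[OF l j1(1) _ j2 cons] unfolding R_def t0_def D_def C_def
    by (cases "j1 \<le> n") (simp_all add: grid_def f_0)
  have term1: "fused_formula f \<eta> \<Lambda> n i1 (j1 - 1) (i2 - 1) j2 (l + 2 * \<eta>)
      * W1 f \<eta> \<Lambda> (int i2 - 1) 1 (int i2) 0 (- \<eta> * \<Lambda> + 2 * \<eta> * of_nat n) l
    = R * (t1 / D) * (C * grid f \<eta> (l - 2 * \<eta> * \<Lambda>) (int n + int i2))"
    unfolding R_def t1_def D_def C_def by (rule fused_formula_term_J1_K0[OF l j1 i2 j2 cons])
  show ?thesis
    unfolding lhs term0 term1 identity by (simp add: algebra_simps)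
qed

lemma fused_formula_step_K0:
  assumes l: "nonzero_on_coset f \<eta> l"
    and j2: "j2 \<le> n" and j1: "j1 \<le> Suc n" and cons: "i1 + j1 = i2 + j2"
  shows "fused_formula f \<eta> \<Lambda> (Suc n) i1 j1 i2 j2 l =
     (if j1 \<le> n then fused_formula f \<eta> \<Lambda> n i1 j1 i2 j2 (l - 2 * \<eta>)
        * W1 f \<eta> \<Lambda> (int i2) 0 (int i2) 0 (- \<eta> * \<Lambda> + 2 * \<eta> * of_nat n) l else 0)
   + (if 1 \<le> j1 \<and> 1 \<le> i2 then fused_formula f \<eta> \<Lambda> n i1 (j1 - 1) (i2 - 1) j2 (l + 2 * \<eta>)
        * W1 f \<eta> \<Lambda> (int i2 - 1) 1 (int i2) 0 (- \<eta> * \<Lambda> + 2 * \<eta> * of_nat n) l else 0)"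
proof -
  consider (vanishing) "i1 < j2" | (j1_0) "j2 \<le> i1" "j1 = 0" | (interior) "1 \<le> j1" "1 \<le> i2"
    using cons by linarith
  then show ?thesis
  proof cases
    case vanishing
    then show ?thesis
      unfolding fused_formula_def using grid_prod_0_eq_0[of f, OF f_0 vanishing] by simp
  next
    case j1_0
    have unit: "fused_unit f \<eta> \<Lambda> (Suc n) i1 j1 i2 j2 l = fused_unit f \<eta> \<Lambda> n i1 j1 i2 j2 (l - 2 * \<eta>)
       * (grid f \<eta> (2 * \<eta> * \<Lambda>) (- int i2 - int n) * grid f \<eta> l (int i2)
          / (grid f \<eta> (2 * \<eta> * \<Lambda>) (- int n) * grid f \<eta> l 0))"
      using fused_unit_step_J0_K0[OF l _ j2 cons] j1_0 l grid_nonzero by simp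
    show ?thesis
      unfolding fused_formula_def unit W1_special_J0_K0[OF of_nat_0_le_iff refl]
      using j1_0 by (simp add: algebra_simps)
  next
    case interior
    then show ?thesis
      using fused_formula_step_K0_interior[OF l j2 interior(1) j1 interior(2) cons] by simp
  qed
qed

lemma fused_formula_step_K1:
  assumes l: "nonzero_on_coset f \<eta> l"
    and j2: "1 \<le> j2" "j2 \<le> Suc n" and j1: "j1 \<le> Suc n" and cons: "i1 + j1 = i2 + j2"
  shows "fused_formula f \<eta> \<Lambda> (Suc n) i1 j1 i2 j2 l =
     (if j1 \<le> n then fused_formula f \<eta> \<Lambda> n i1 j1 (Suc i2) (j2 - 1) (l - 2 * \<eta>)
        * W1 f \<eta> \<Lambda> (int i2 + 1) 0 (int i2) 1 (- \<eta> * \<Lambda> + 2 * \<eta> * of_nat n) l else 0)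
   + (if 1 \<le> j1 then fused_formula f \<eta> \<Lambda> n i1 (j1 - 1) i2 (j2 - 1) (l + 2 * \<eta>)
        * W1 f \<eta> \<Lambda> (int i2) 1 (int i2) 1 (- \<eta> * \<Lambda> + 2 * \<eta> * of_nat n) l else 0)"
proof -
  define R where "R = fused_unit f \<eta> \<Lambda> (Suc n) i1 j1 i2 j2 l * grid_prod f \<eta> 0 (int i1) (j2 - 1)"
  define E where "E = grid_prod f \<eta> (l - 2 * \<eta> * \<Lambda>) (int i2 + int j1 - 1) j1"
  define D where "D = grid f \<eta> 0 (int n + 1) * grid f \<eta> l (int i2 + int j1 - int n) * grid f \<eta> l 0"
  define t0 where "t0 = grid f \<eta> 0 (int n + 1 - int j1) * grid f \<eta> l (int j1) * grid f \<eta> l (int i2 - int n) * grid f \<eta> 0 (int i2 + 1)"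
  define t1 where "t1 = grid f \<eta> 0 (int j1) * grid f \<eta> l (int i2 + 1) * grid f \<eta> l (int j1 - (int n + 1)) * grid f \<eta> 0 (int i2 - int n)"
  have "D \<noteq> 0"
    unfolding D_def using l grid_nonzero by simp
  moreover have exponent: "int i1 - int (j2 - 1) = int i2 - int j1 + 1"
    using cons j2 by simp
  ultimately have identity: "grid f \<eta> 0 (int i1 - int (j2 - 1)) = t0 / D + t1 / D"
    using grid_identity_K1[where i = "int i2" and j = "int j1" and N = "int n" and l = l]
    unfolding exponent D_def t0_def t1_def by (simp add: field_simps)
  have "grid_prod f \<eta> 0 (int i1) j2 = grid_prod f \<eta> 0 (int i1) (j2 - 1) * grid f \<eta> 0 (int i1 - int (j2 - 1))"
    by (rule grid_prod_Suc_last) (use j2 in simp_all)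
  then have lhs: "fused_formula f \<eta> \<Lambda> (Suc n) i1 j1 i2 j2 l = R * (grid f \<eta> 0 (int i1 - int (j2 - 1)) * E)"
    unfolding fused_formula_def R_def E_def by (simp only: mult_ac)
  have "\<not> j1 \<le> n \<Longrightarrow> int n + 1 - int j1 = 0"
    using j1 by simp
  then have term0: "(if j1 \<le> n then fused_formula f \<eta> \<Lambda> n i1 j1 (Suc i2) (j2 - 1) (l - 2 * \<eta>)
      * W1 f \<eta> \<Lambda> (int i2 + 1) 0 (int i2) 1 (- \<eta> * \<Lambda> + 2 * \<eta> * of_nat n) l else 0)
    = R * (t0 / D) * E"
    using fused_formula_term_J0_K1[OF l _ j2] unfolding R_def t0_def D_def E_def
    by (cases "j1 \<le> n") (simp_all add: grid_def f_0)
  have term1: "(if 1 \<le> j1 then fused_formula f \<eta> \<Lambda> n i1 (j1 - 1) i2 (j2 - 1) (l + 2 * \<eta>)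
      * W1 f \<eta> \<Lambda> (int i2) 1 (int i2) 1 (- \<eta> * \<Lambda> + 2 * \<eta> * of_nat n) l else 0)
    = R * (t1 / D) * E"
    using fused_formula_term_J1_K1[OF l _ j1 j2] unfolding R_def t1_def D_def E_def
    by (cases "j1 = 0") (simp_all add: grid_def f_0)
  show ?thesis
    unfolding lhs term0 term1 identity by (simp add: algebra_simps)
qed

end

section \<open>Columns\<close>

lemma bin_seqs_finite: "finite (bin_seqs n)"
proof -
  have "bin_seqs n = {xs. set xs \<subseteq> {0, 1} \<and> length xs = n}"
    unfolding bin_seqs_def by auto
  then show ?thesis
    by (simp add: finite_lists_length_eq)
qed

lemma bin_seqs_snoc: "xs @ [a] \<in> bin_seqs (Suc n) \<longleftrightarrow> xs \<in> bin_seqs n \<and> a \<in> {0, 1}"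
  unfolding bin_seqs_def by auto

lemma bin_seqs_sum_list_le: "xs \<in> bin_seqs n \<Longrightarrow> sum_list xs \<le> n"
proof -
  have "set xs \<subseteq> {0, 1} \<Longrightarrow> sum_list xs \<le> length xs" for xs :: "nat list"
    by (induction xs) auto
  then show "xs \<in> bin_seqs n \<Longrightarrow> sum_list xs \<le> n"
    unfolding bin_seqs_def by auto
qed

lemma sum_bin_seqs_Suc:
  fixes g :: "nat list \<Rightarrow> 'a::comm_monoid_add"
  shows "(\<Sum>zs\<in>{zs \<in> bin_seqs (Suc n). sum_list zs = j}. g zs)
   = (\<Sum>xs\<in>{xs \<in> bin_seqs n. sum_list xs = j}. g (xs @ [0]))
   + (if 1 \<le> j then (\<Sum>xs\<in>{xs \<in> bin_seqs n. sum_list xs = j - 1}. g (xs @ [1])) else 0)"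
proof -
  define A where "A = {xs \<in> bin_seqs n. sum_list xs = j}"
  define B where "B = (if 1 \<le> j then {xs \<in> bin_seqs n. sum_list xs = j - 1} else {})"
  have "{zs \<in> bin_seqs (Suc n). sum_list zs = j} = (\<lambda>xs. xs @ [0]) ` A \<union> (\<lambda>xs. xs @ [1]) ` B"
  proof (intro set_eqI iffI)
    fix zs
    assume "zs \<in> {zs \<in> bin_seqs (Suc n). sum_list zs = j}"
    then have "length zs = Suc n" and zs: "zs \<in> bin_seqs (Suc n)" "sum_list zs = j"
      unfolding bin_seqs_def by auto
    then obtain xs a where zs_eq: "zs = xs @ [a]"
      by (metis length_Suc_conv_rev)
    with zs have xs: "xs \<in> bin_seqs n" and "a = 0 \<or> a = 1"
      using bin_seqs_snoc[of xs a n] by auto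
    then show "zs \<in> (\<lambda>xs. xs @ [0]) ` A \<union> (\<lambda>xs. xs @ [1]) ` B"
    proof (elim disjE)
      assume "a = 0"
      with zs zs_eq xs have "xs \<in> A"
        unfolding A_def by simp
      with zs_eq \<open>a = 0\<close> show ?thesis
        by blast
    next
      assume "a = 1"
      with zs zs_eq xs have "xs \<in> B"
        unfolding B_def by auto
      with zs_eq \<open>a = 1\<close> show ?thesis
        by blast
    qed
  qed (auto simp: A_def B_def bin_seqs_def split: if_splits)
  moreover have "finite A" "finite B"
    unfolding A_def B_def using bin_seqs_finite by auto
  moreover have "(\<lambda>xs. xs @ [0]) ` A \<inter> (\<lambda>xs. xs @ [1]) ` B = {}"
    by auto
  ultimately have "(\<Sum>zs\<in>{zs \<in> bin_seqs (Suc n). sum_list zs = j}. g zs)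
      = (\<Sum>xs\<in>A. g (xs @ [0])) + (\<Sum>xs\<in>B. g (xs @ [1]))"
    by (simp add: sum.union_disjoint sum.reindex inj_on_def)
  then show ?thesis
    unfolding A_def B_def by simp
qed

lemma ipos_snoc:
  assumes "length xs = n" "length ys = n" "k \<le> Suc n"
  shows "ipos i1 (xs @ [a]) (ys @ [b]) k = ipos i1 xs ys k"
  unfolding ipos_def using assms by (intro arg_cong[where f = "\<lambda>x. int i1 + x"] sum.cong) (auto simp: nth_append)

lemma ipos_snoc_Suc:
  assumes "length xs = n" "length ys = n"
  shows "ipos i1 (xs @ [a]) (ys @ [b]) (Suc (Suc n)) = ipos i1 xs ys (Suc n) + int a - int b"
proof -
  have "ipos i1 (xs @ [a]) (ys @ [b]) (Suc (Suc n))
      = ipos i1 (xs @ [a]) (ys @ [b]) (Suc n) + (int ((xs @ [a]) ! n) - int ((ys @ [b]) ! n))"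
    unfolding ipos_def by simp
  then show ?thesis
    using ipos_snoc[OF assms, of "Suc n"] assms by (simp add: nth_append)
qed

lemma Phi_snoc:
  assumes "length xs = n" "k \<le> n"
  shows "Phi \<eta> l (Suc n) (xs @ [a]) k = Phi \<eta> (l + (if a = 0 then - 2 * \<eta> else 2 * \<eta>)) n xs k"
proof -
  have "{k + 1..Suc n} = insert (Suc n) {k + 1..n}"
    using assms by auto
  moreover have "(\<Sum>m\<in>{k + 1..n}. (if (xs @ [a]) ! (m - 1) = 0 then - 2 * \<eta> else 2 * \<eta>))
      = (\<Sum>m\<in>{k + 1..n}. (if xs ! (m - 1) = 0 then - 2 * \<eta> else 2 * \<eta>))"
    by (rule sum.cong) (use assms in \<open>auto simp: nth_append\<close>)
  ultimately show ?thesis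
    unfolding Phi_def using assms by (simp add: nth_append algebra_simps)
qed

definition column_prod :: "(complex \<Rightarrow> complex) \<Rightarrow> complex \<Rightarrow> complex \<Rightarrow> nat \<Rightarrow>
    nat \<Rightarrow> nat list \<Rightarrow> nat list \<Rightarrow> complex \<Rightarrow> complex \<Rightarrow> complex" where
  "column_prod f \<eta> \<Lambda> J i1 J1 J2 v l =
    (\<Prod>k\<in>{1..J}. W1 f \<eta> \<Lambda> (ipos i1 J1 J2 k) (J1 ! (k - 1)) (ipos i1 J1 J2 (k + 1)) (J2 ! (k - 1))
                      (v + 2 * \<eta> * of_nat (k - 1)) (Phi \<eta> l J J1 k))"

text \<open>The positivity requirement in \<open>WJcol\<close> is redundant: \<open>W1\<close> already vanishes when its
  first argument is negative.\<close>

lemma WJcol_eq_column_prod: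
  "WJcol f \<eta> \<Lambda> J i1 J1 i2 J2 v l = (if ipos i1 J1 J2 (J + 1) = int i2 then column_prod f \<eta> \<Lambda> J i1 J1 J2 v l else 0)"
proof (cases "\<forall>k\<in>{1..J + 1}. ipos i1 J1 J2 k \<ge> 0")
  case False
  then obtain k where k: "k \<in> {1..J + 1}" "ipos i1 J1 J2 k < 0"
    by force
  show ?thesis
  proof (cases "ipos i1 J1 J2 (J + 1) = int i2")
    case True
    with k have "k \<in> {1..J}"
      by (cases "k = J + 1") auto
    with k have "column_prod f \<eta> \<Lambda> J i1 J1 J2 v l = 0"
      unfolding column_prod_def W1_def by (intro prod_zero) auto
    with False show ?thesis
      unfolding WJcol_def[folded column_prod_def] by simp
  qed (simp add: WJcol_def)
qed (simp add: WJcol_def[folded column_prod_def])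

lemma column_prod_snoc:
  assumes lx: "length xs = n" and ly: "length ys = n"
  shows "column_prod f \<eta> \<Lambda> (Suc n) i1 (xs @ [a]) (ys @ [b]) v l
    = column_prod f \<eta> \<Lambda> n i1 xs ys v (l + (if a = 0 then - 2 * \<eta> else 2 * \<eta>))
      * W1 f \<eta> \<Lambda> (ipos i1 xs ys (Suc n)) a (ipos i1 xs ys (Suc n) + int a - int b) b (v + 2 * \<eta> * of_nat n) l"
proof -
  have "column_prod f \<eta> \<Lambda> (Suc n) i1 (xs @ [a]) (ys @ [b]) v l
    = (\<Prod>k\<in>{1..n}. W1 f \<eta> \<Lambda> (ipos i1 (xs @ [a]) (ys @ [b]) k) ((xs @ [a]) ! (k - 1))
        (ipos i1 (xs @ [a]) (ys @ [b]) (k + 1)) ((ys @ [b]) ! (k - 1))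
        (v + 2 * \<eta> * of_nat (k - 1)) (Phi \<eta> l (Suc n) (xs @ [a]) k))
      * W1 f \<eta> \<Lambda> (ipos i1 (xs @ [a]) (ys @ [b]) (Suc n)) a
        (ipos i1 (xs @ [a]) (ys @ [b]) (Suc (Suc n))) b (v + 2 * \<eta> * of_nat n) (Phi \<eta> l (Suc n) (xs @ [a]) (Suc n))"
    unfolding column_prod_def using lx ly by (simp add: prod.cl_ivl_Suc nth_append)
  also have "(\<Prod>k\<in>{1..n}. W1 f \<eta> \<Lambda> (ipos i1 (xs @ [a]) (ys @ [b]) k) ((xs @ [a]) ! (k - 1))
        (ipos i1 (xs @ [a]) (ys @ [b]) (k + 1)) ((ys @ [b]) ! (k - 1))
        (v + 2 * \<eta> * of_nat (k - 1)) (Phi \<eta> l (Suc n) (xs @ [a]) k))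
      = column_prod f \<eta> \<Lambda> n i1 xs ys v (l + (if a = 0 then - 2 * \<eta> else 2 * \<eta>))"
    unfolding column_prod_def
    by (rule prod.cong) (use lx ly ipos_snoc[OF lx ly] Phi_snoc[OF lx] in \<open>auto simp: nth_append\<close>)
  finally show ?thesis
    using ipos_snoc[OF lx ly, of "Suc n"] ipos_snoc_Suc[OF lx ly] by (simp add: Phi_def)
qed

lemma WJcol_snoc:
  assumes lx: "length xs = n" and ly: "length ys = n"
  shows "WJcol f \<eta> \<Lambda> (Suc n) i1 (xs @ [a]) i2 (ys @ [b]) v l =
    (if 0 \<le> int i2 - int a + int b then
       WJcol f \<eta> \<Lambda> n i1 xs (nat (int i2 - int a + int b)) ys v (l + (if a = 0 then - 2 * \<eta> else 2 * \<eta>))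
       * W1 f \<eta> \<Lambda> (int i2 - int a + int b) a (int i2) b (v + 2 * \<eta> * of_nat n) l
     else 0)"
proof (cases "ipos i1 xs ys (Suc n) = int i2 - int a + int b")
  case True
  moreover have "W1 f \<eta> \<Lambda> (int i2 - int a + int b) a (int i2) b (v + 2 * \<eta> * of_nat n) l = 0"
    if "int i2 - int a + int b < 0"
    using that unfolding W1_def by simp
  ultimately show ?thesis
    unfolding WJcol_eq_column_prod column_prod_snoc[OF lx ly]
    using ipos_snoc_Suc[OF lx ly] by auto
qed (auto simp: WJcol_eq_column_prod ipos_snoc_Suc[OF lx ly])

definition column_sum :: "(complex \<Rightarrow> complex) \<Rightarrow> complex \<Rightarrow> complex \<Rightarrow> nat \<Rightarrow>
    nat \<Rightarrow> nat \<Rightarrow> nat \<Rightarrow> nat list \<Rightarrow> complex \<Rightarrow> complex \<Rightarrow> complex" where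
  "column_sum f \<eta> \<Lambda> n i1 j1 i2 K v l = (\<Sum>J1\<in>{xs \<in> bin_seqs n. sum_list xs = j1}. WJcol f \<eta> \<Lambda> n i1 J1 i2 K v l)"

lemma column_sum_beyond: "n < j1 \<Longrightarrow> column_sum f \<eta> \<Lambda> n i1 j1 i2 K v l = 0"
proof -
  assume "n < j1"
  then have empty: "{xs \<in> bin_seqs n. sum_list xs = j1} = {}"
    using bin_seqs_sum_list_le by fastforce
  show ?thesis
    unfolding column_sum_def empty by simp
qed

lemma column_sum_Suc:
  assumes "length K = n"
  shows "column_sum f \<eta> \<Lambda> (Suc n) i1 j1 i2 (K @ [b]) v l
    = column_sum f \<eta> \<Lambda> n i1 j1 (i2 + b) K v (l - 2 * \<eta>)
        * W1 f \<eta> \<Lambda> (int i2 + int b) 0 (int i2) b (v + 2 * \<eta> * of_nat n) l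
    + (if 1 \<le> j1 \<and> 1 \<le> i2 + b then column_sum f \<eta> \<Lambda> n i1 (j1 - 1) (i2 + b - 1) K v (l + 2 * \<eta>)
        * W1 f \<eta> \<Lambda> (int i2 + int b - 1) 1 (int i2) b (v + 2 * \<eta> * of_nat n) l else 0)"
proof -
  have snoc: "(\<Sum>xs\<in>{xs \<in> bin_seqs n. sum_list xs = j}. WJcol f \<eta> \<Lambda> (Suc n) i1 (xs @ [a]) i2 (K @ [b]) v l)
    = (if 0 \<le> int i2 - int a + int b then
         column_sum f \<eta> \<Lambda> n i1 j (nat (int i2 - int a + int b)) K v (l + (if a = 0 then - 2 * \<eta> else 2 * \<eta>))
         * W1 f \<eta> \<Lambda> (int i2 - int a + int b) a (int i2) b (v + 2 * \<eta> * of_nat n) l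
       else 0)" for j a
    unfolding column_sum_def using WJcol_snoc[OF _ assms] by (simp add: bin_seqs_def sum_distrib_right)
  have "nat (int i2 + int b) = i2 + b" and "1 \<le> i2 + b \<Longrightarrow> nat (int i2 - 1 + int b) = i2 + b - 1"
    by (simp_all add: nat_eq_iff)
  then show ?thesis
    unfolding column_sum_def[of _ _ _ "Suc n"] sum_bin_seqs_Suc snoc by (auto simp: algebra_simps)
qed

context fusion_parameters
begin

lemma column_sum_eq_fused_formula:
  assumes "K \<in> bin_seqs n" and "i1 + j1 = i2 + sum_list K" and "nonzero_on_coset f \<eta> l"
  shows "column_sum f \<eta> \<Lambda> n i1 j1 i2 K (- \<eta> * \<Lambda>) l
    = (if j1 \<le> n then fused_formula f \<eta> \<Lambda> n i1 j1 i2 (sum_list K) l else 0)"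
  using assms
proof (induction n arbitrary: K j1 i2 l)
  case 0
  then have "K = []" "j1 = 0 \<Longrightarrow> i2 = i1"
    unfolding bin_seqs_def by auto
  moreover have "{xs \<in> bin_seqs 0. sum_list xs = 0} = {[]}"
    unfolding bin_seqs_def by auto
  ultimately show ?case
    using column_sum_beyond[of 0 j1] grid_prod_Lambda_nonzero
    by (simp add: column_sum_def fused_formula_def fused_unit_def WJcol_def ipos_def)
next
  case (Suc n)
  from Suc.prems(1) have "length K = Suc n"
    unfolding bin_seqs_def by simp
  then obtain K' b where K: "K = K' @ [b]"
    by (metis length_Suc_conv_rev)
  with Suc.prems(1) have K': "K' \<in> bin_seqs n" and b: "b = 0 \<or> b = 1"
    using bin_seqs_snoc[of K' b n] by auto
  then have len: "length K' = n" and j2: "sum_list K' \<le> n"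
    using bin_seqs_sum_list_le unfolding bin_seqs_def by auto
  note l = nonzero_on_coset_shift[OF Suc.prems(3)]
  show ?case
  proof (cases "j1 \<le> Suc n")
    case False
    then show ?thesis
      by (simp add: column_sum_beyond)
  next
    case j1: True
    from b show ?thesis
    proof (elim disjE)
      assume b0: "b = 0"
      then have sum_K: "sum_list K = sum_list K'" and cons: "i1 + j1 = i2 + sum_list K'"
        using Suc.prems(2) K by simp_all
      show ?thesis
        unfolding sum_K fused_formula_step_K0[OF Suc.prems(3) j2 j1 cons]
        unfolding K column_sum_Suc[OF len]
        using Suc.IH[OF K' cons l(2)] Suc.IH[OF K' _ l(1), of "j1 - 1" "i2 - 1"] j1 cons b0 by auto
    next
      assume b1: "b = 1"
      then have sum_K: "sum_list K = Suc (sum_list K')" and cons: "i1 + j1 = Suc i2 + sum_list K'"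
        using Suc.prems(2) K by simp_all
      then have K_range: "1 \<le> sum_list K" "sum_list K \<le> Suc n"
        using j2 by simp_all
      show ?thesis
        unfolding fused_formula_step_K1[OF Suc.prems(3) K_range j1 Suc.prems(2)]
        unfolding K column_sum_Suc[OF len] sum_K
        using Suc.IH[OF K' cons l(2)] Suc.IH[OF K' _ l(1), of "j1 - 1" i2] j1 cons b1 by auto
    qed
  qed
qed

lemma epoch_expression_eq_fused_formula:
  assumes j1: "j1 \<le> J" and l: "nonzero_on_coset f \<eta> l"
  shows "f (2 * \<eta>) powi (int i2 - int i1)
    * ((if i1 \<ge> j2 then 1 else 0) * epoch f \<eta> (2 * \<eta> * of_nat J) (int J)
       / (epoch f \<eta> (2 * \<eta> * of_nat j1) (int j1) * epoch f \<eta> (2 * \<eta> * of_nat (J - j1)) (int (J - j1))))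
    * (epoch f \<eta> (2 * \<eta> * \<Lambda>) (int i1) / epoch f \<eta> (2 * \<eta> * \<Lambda>) (int i2))
    * (epoch f \<eta> (2 * \<eta> * of_nat i1) (int j2) * epoch f \<eta> (2 * \<eta> * (\<Lambda> - of_nat i1)) (int (J - j2))
       / epoch f \<eta> (2 * \<eta> * \<Lambda>) (int J))
    * (epoch f \<eta> (l + 2 * \<eta> * of_nat i2) (int (J - j1))
         * epoch f \<eta> (l + 2 * \<eta> * (of_nat i2 + of_nat j1 - \<Lambda> - 1)) (int j1)
       / (epoch f \<eta> (l + 2 * \<eta> * of_nat j1) (int (J - j1))
         * epoch f \<eta> (l + 2 * \<eta> * (2 * of_nat j1 - of_nat J - 1)) (int j1)))
    = fused_formula f \<eta> \<Lambda> J i1 j1 i2 j2 l"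
proof -
  have power: "f (2 * \<eta>) = grid f \<eta> 0 1"
    unfolding grid_def by simp
  have epochs:
    "epoch f \<eta> (2 * \<eta> * of_nat J) (int J) = grid_prod f \<eta> 0 (int J) J"
    "epoch f \<eta> (2 * \<eta> * of_nat j1) (int j1) = grid_prod f \<eta> 0 (int j1) j1"
    "epoch f \<eta> (2 * \<eta> * of_nat (J - j1)) (int (J - j1)) = grid_prod f \<eta> 0 (int J - int j1) (J - j1)"
    "epoch f \<eta> (2 * \<eta> * \<Lambda>) (int k) = grid_prod f \<eta> (2 * \<eta> * \<Lambda>) 0 k"
    "epoch f \<eta> (2 * \<eta> * of_nat i1) (int j2) = grid_prod f \<eta> 0 (int i1) j2"
    "epoch f \<eta> (2 * \<eta> * (\<Lambda> - of_nat i1)) (int (J - j2)) = grid_prod f \<eta> (2 * \<eta> * \<Lambda>) (- int i1) (J - j2)"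
    "epoch f \<eta> (l + 2 * \<eta> * of_nat i2) (int (J - j1)) = grid_prod f \<eta> l (int i2) (J - j1)"
    "epoch f \<eta> (l + 2 * \<eta> * (of_nat i2 + of_nat j1 - \<Lambda> - 1)) (int j1)
      = grid_prod f \<eta> (l - 2 * \<eta> * \<Lambda>) (int i2 + int j1 - 1) j1"
    "epoch f \<eta> (l + 2 * \<eta> * of_nat j1) (int (J - j1)) = grid_prod f \<eta> l (int j1) (J - j1)"
    "epoch f \<eta> (l + 2 * \<eta> * (2 * of_nat j1 - of_nat J - 1)) (int j1) = grid_prod f \<eta> l (2 * int j1 - int J - 1) j1"
    for k
    by (rule epoch_eq_grid_prod, use j1 in \<open>simp add: algebra_simps of_nat_diff\<close>)+
  show ?thesis
  proof (cases "j2 \<le> i1")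
    case True
    then show ?thesis
      unfolding power epochs fused_formula_def fused_unit_def using j1 l grid_nonzero by (simp add: field_simps)
  next
    case False
    then show ?thesis
      unfolding power epochs fused_formula_def using grid_prod_0_eq_0[of f, OF f_0] by simp
  qed
qed

end

theorem theorem3p10:
  fixes \<eta> \<tau> \<Lambda> l :: complex and f :: "complex \<Rightarrow> complex"
    and J i1 i2 j1 j2 :: nat
  assumes tau: "Im \<tau> > 0"
    and f_choice: "f = theta_fn \<tau> \<or> f = (\<lambda>z. sin (of_real pi * z))"
    and gen1: "\<forall>k::int. k \<noteq> 0 \<longrightarrow> f (2 * \<eta> * of_int k) \<noteq> 0"
    and gen2: "\<forall>k::int. f (2 * \<eta> * (\<Lambda> - of_int k)) \<noteq> 0"
    and gen3: "\<forall>k::int. f (l + 2 * \<eta> * of_int k) \<noteq> 0"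
    and J: "J > 0"
    and j1: "j1 \<le> J" and j2: "j2 \<le> J"
    and cons: "i1 + j1 = i2 + j2"
  shows "WJ f \<eta> \<Lambda> J i1 j1 i2 j2 (- \<eta> * \<Lambda>) l =
    f (2 * \<eta>) powi (int i2 - int i1)
    * ((if i1 \<ge> j2 then 1 else 0) * epoch f \<eta> (2 * \<eta> * of_nat J) (int J)
       / (epoch f \<eta> (2 * \<eta> * of_nat j1) (int j1) * epoch f \<eta> (2 * \<eta> * of_nat (J - j1)) (int (J - j1))))
    * (epoch f \<eta> (2 * \<eta> * \<Lambda>) (int i1) / epoch f \<eta> (2 * \<eta> * \<Lambda>) (int i2))
    * (epoch f \<eta> (2 * \<eta> * of_nat i1) (int j2) * epoch f \<eta> (2 * \<eta> * (\<Lambda> - of_nat i1)) (int (J - j2))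
       / epoch f \<eta> (2 * \<eta> * \<Lambda>) (int J))
    * (epoch f \<eta> (l + 2 * \<eta> * of_nat i2) (int (J - j1))
         * epoch f \<eta> (l + 2 * \<eta> * (of_nat i2 + of_nat j1 - \<Lambda> - 1)) (int j1)
       / (epoch f \<eta> (l + 2 * \<eta> * of_nat j1) (int (J - j1))
         * epoch f \<eta> (l + 2 * \<eta> * (2 * of_nat j1 - of_nat J - 1)) (int j1)))"
proof -
  interpret fusion_parameters f \<eta> \<Lambda>
    by unfold_locales (use f_choice has_product_formula_theta[OF tau] has_product_formula_sin gen1 gen2 in auto)
  have l: "nonzero_on_coset f \<eta> l"
    using gen3 unfolding nonzero_on_coset_def .
  define K where "K = (SOME K. K \<in> bin_seqs J \<and> sum_list K = j2)"
  have "replicate j2 1 @ replicate (J - j2) 0 \<in> bin_seqs J \<and> sum_list (replicate j2 (1::nat) @ replicate (J - j2) 0) = j2"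
    using j2 unfolding bin_seqs_def by (auto simp: sum_list_replicate)
  then have K: "K \<in> bin_seqs J" "sum_list K = j2"
    unfolding K_def by (metis (mono_tags, lifting) someI)+
  have "WJ f \<eta> \<Lambda> J i1 j1 i2 j2 (- \<eta> * \<Lambda>) l = column_sum f \<eta> \<Lambda> J i1 j1 i2 K (- \<eta> * \<Lambda>) l"
    unfolding WJ_def column_sum_def K_def Let_def ..
  also have "\<dots> = fused_formula f \<eta> \<Lambda> J i1 j1 i2 j2 l"
    using column_sum_eq_fused_formula[OF K(1) _ l, of i1 j1 i2] K(2) cons j1 by simp
  finally show ?thesis
    unfolding epoch_expression_eq_fused_formula[OF j1 l] .
qed

end
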